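(* There is an absolute constant $C$ such that, for the Adaptive-Threshold Dealer with any $n,d$ and every turn $t$ of the Adaptive phase, the expected number of mini-deck samples performed at turn $t$ until a suitable mini-deck is found is at most $C$; i.e. each turn of the Adaptive phase runs in expected constant time.
   Context: Adaptive-Threshold Dealer with $d$ mini-decks on $n$ cards ($d\mid n$): the deck is split into $d$ mini-decks, each a fixed ordered stack of $n/d$ cards. Let $L_{i,t}$ be the number of cards drawn from mini-deck $i$ before turn $t$. Adaptive phase (turns $t=1,\dots,n-2d$): repeatedly sample $i\in[d]$ uniformly at random until $L_{i,t}<\lceil t/d\rceil+1$ (a suitable mini-deck), then draw the top card of mini-deck $i$. Final phase (last $2d$ turns): remaining cards drawn in uniformly random order. *)

theory Defs
  imports "HOL-Probability.Probability"
begin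

text \<open>A load vector L :: nat => nat gives, for each mini-deck i, the number of cards
  already drawn from it.\<close>

definition ATD_threshold :: "nat \<Rightarrow> nat \<Rightarrow> nat" where
  "ATD_threshold d t = nat \<lceil>real t / real d\<rceil> + 1"

definition ATD_suitable :: "nat \<Rightarrow> (nat \<Rightarrow> nat) \<Rightarrow> nat \<Rightarrow> nat \<Rightarrow> bool" where
  "ATD_suitable d L t i \<longleftrightarrow> i < d \<and> L i < ATD_threshold d t"

text \<open>Given the i.i.d. stream xs of uniform samples from the d mini-decks used at
  turn t, the number of samples performed (including the successful one) and the
  mini-deck finally chosen.\<close>

definition ATD_nsamples :: "nat \<Rightarrow> (nat \<Rightarrow> nat) \<Rightarrow> nat \<Rightarrow> nat stream \<Rightarrow> nat" where
  "ATD_nsamples d L t xs = Suc (LEAST k. ATD_suitable d L t (xs !! k))"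

definition ATD_pick :: "nat \<Rightarrow> (nat \<Rightarrow> nat) \<Rightarrow> nat \<Rightarrow> nat stream \<Rightarrow> nat" where
  "ATD_pick d L t xs = xs !! (LEAST k. ATD_suitable d L t (xs !! k))"

text \<open>The randomness: omega !! t is the stream of samples used at turn t
  (omega !! 0 is unused).  ATD_L d omega t = L_{.,t}, the loads before turn t.\<close>

fun ATD_L :: "nat \<Rightarrow> nat stream stream \<Rightarrow> nat \<Rightarrow> nat \<Rightarrow> nat" where
  "ATD_L d \<omega> 0 = (\<lambda>i. 0)"
| "ATD_L d \<omega> (Suc 0) = (\<lambda>i. 0)"
| "ATD_L d \<omega> (Suc (Suc m)) =
     (let L = ATD_L d \<omega> (Suc m); c = ATD_pick d L (Suc m) (\<omega> !! Suc m)
      in L(c := L c + 1))"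

definition ATD_space :: "nat \<Rightarrow> nat stream stream measure" where
  "ATD_space d = stream_space (stream_space (measure_pmf (pmf_of_set {..<d})))"

end

theory Submission
  imports Defs
begin

(*
  At a turn with set S of suitable mini-decks the number of samples is geometric with mean
  d / card S, and the mini-deck drawn is uniform on S. So the loads form a Markov chain in which
  a uniformly random suitable mini-deck receives the next card, and it suffices to bound the
  expectation of d / card S along this chain.

  Group the turns into rounds of d turns; during round c the threshold is c + 2, and at the start
  of a round the spare capacities r_j = c + 2 - L_j are positive and sum to 2 d. By Cauchy-Schwarz,
  d / card S is at most the sum of the r_j^2 divided by d, hence at most 4 * 10^6 / d times the
  potential, the sum of the lambda^(r_j) with lambda = 1.001. The potential only decreases within a
  round, and from one round start to the next its expectation contracts by the factor
  1 - 10^(-6) up to an additive 3 d, so it stays O(d).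

  The contraction is a bound on the moment generating function of the number of cards a fixed
  mini-deck i with r_i >= 2 receives during a round. Tilting the choice of i by mu = 1/lambda
  turns it into a product of one-step factors, each at most 1 - (1 - mu)/d and strictly smaller
  while some mini-decks are full. The mini-decks with spare capacity 1 or 2, of which there are
  enough because the r_j sum to 2 d, fill up with constant probability in the second half of the
  round, and this gains the factor 1 - (1 - mu)/480.
*)

lemma prob_space_stream_pmf: "prob_space (stream_space (measure_pmf p))"
  by (rule prob_space.prob_space_stream_space[OF prob_space_measure_pmf])

lemma nn_integral_stl:
  assumes "prob_space M" "f \<in> borel_measurable (stream_space M)"
  shows "(\<integral>\<^sup>+\<omega>. f (stl \<omega>) \<partial>stream_space M) = (\<integral>\<^sup>+\<omega>. f \<omega> \<partial>stream_space M)"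
  using assms by (simp add: prob_space.nn_integral_stream_space prob_space.emeasure_space_1
      prob_space.prob_space_stream_space measurable_compose[OF measurable_stl])

lemma integrable_bounded_pmf:
  fixes g :: "'a \<Rightarrow> real"
  assumes "\<And>x. 0 \<le> g x" "\<And>x. g x \<le> B"
  shows "integrable (measure_pmf p) g"
  by (rule measure_pmf.integrable_const_bound[where B=B]) (use assms in \<open>auto intro: order.trans\<close>)

lemma expectation_bind_pmf:
  fixes g :: "'b \<Rightarrow> real"
  assumes g0: "\<And>x. 0 \<le> g x" and gB: "\<And>x. g x \<le> B"
  shows "measure_pmf.expectation (bind_pmf p q) g = measure_pmf.expectation p (\<lambda>y. measure_pmf.expectation (q y) g)"
proof -
  have exp_nonneg: "0 \<le> measure_pmf.expectation (q y) g" for y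
    using g0 by (intro integral_nonneg_AE) auto
  have exp_le: "measure_pmf.expectation (q y) g \<le> B" for y
  proof -
    have "measure_pmf.expectation (q y) g \<le> measure_pmf.expectation (q y) (\<lambda>_. B)"
      by (rule integral_mono) (use integrable_bounded_pmf[OF g0 gB] gB in auto)
    then show ?thesis
      by simp
  qed
  have "ennreal (measure_pmf.expectation (bind_pmf p q) g) = (\<integral>\<^sup>+x. ennreal (g x) \<partial>bind_pmf p q)"
    by (rule nn_integral_eq_integral[symmetric]) (use integrable_bounded_pmf[OF g0 gB] g0 in auto)
  also have "\<dots> = (\<integral>\<^sup>+y. ennreal (measure_pmf.expectation (q y) g) \<partial>p)"
    unfolding nn_integral_bind_pmf
    by (intro nn_integral_cong nn_integral_eq_integral) (use integrable_bounded_pmf[OF g0 gB] g0 in auto)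
  also have "\<dots> = ennreal (measure_pmf.expectation p (\<lambda>y. measure_pmf.expectation (q y) g))"
    by (rule nn_integral_eq_integral) (use integrable_bounded_pmf[OF exp_nonneg exp_le] exp_nonneg in auto)
  finally show ?thesis
    using exp_nonneg g0 by (subst (asm) ennreal_inj) (auto intro: integral_nonneg_AE)
qed

lemma cond_pmf_of_set:
  assumes "finite B" "A \<inter> B \<noteq> {}"
  shows "cond_pmf (pmf_of_set B) A = pmf_of_set (A \<inter> B)"
proof -
  have "B \<noteq> {}" "finite (A \<inter> B)" "card (A \<inter> B) > 0"
    using assms by (auto simp: card_gt_0_iff)
  then show ?thesis
    using assms
    by (intro pmf_eqI) (auto simp: pmf_cond measure_pmf_of_set Int_commute split: split_indicator)
qed

section \<open>Waiting for a hit in an i.i.d. stream\<close>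

definition hit_time :: "'a set \<Rightarrow> 'a stream \<Rightarrow> nat" where
  "hit_time A xs = (LEAST k. xs !! k \<in> A)"

lemma hit_time_minimal: "m < hit_time A xs \<Longrightarrow> xs !! m \<notin> A"
  unfolding hit_time_def by (rule not_less_Least)

lemma measurable_hit_time [measurable]:
  "hit_time A \<in> measurable (stream_space (measure_pmf p)) (count_space UNIV)"
  unfolding hit_time_def[abs_def]
  by (intro measurable_Least measurable_compose[OF measurable_snth]) simp

lemma measurable_hit_value [measurable]:
  "(\<lambda>xs. xs !! hit_time A xs) \<in> measurable (stream_space (measure_pmf p)) (count_space UNIV)"
  by (rule measurable_compose_countable'[where f="\<lambda>i xs. xs !! i" and I=UNIV])
     (auto intro: measurable_compose[OF measurable_snth])

fun miss_then :: "'a set \<Rightarrow> ('a stream \<Rightarrow> ennreal) \<Rightarrow> nat \<Rightarrow> 'a stream \<Rightarrow> ennreal" where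
  "miss_then A f 0 xs = f xs"
| "miss_then A f (Suc k) xs = indicator (-A) (shd xs) * miss_then A f k (stl xs)"

lemma miss_then_eq: "miss_then A f k xs = (\<Prod>m<k. indicator (-A) (xs !! m)) * f (sdrop k xs)"
  by (induction k arbitrary: xs) (simp_all del: prod.lessThan_Suc add: prod.lessThan_Suc_shift mult.assoc)

lemma miss_then_before_hit:
  assumes "\<And>m. m < k \<Longrightarrow> xs !! m \<notin> A"
  shows "miss_then A f k xs = f (sdrop k xs)"
  using assms by (simp add: miss_then_eq prod.neutral)

lemma measurable_miss_then [measurable]:
  assumes "f \<in> borel_measurable (stream_space (measure_pmf p))"
  shows "miss_then A f k \<in> borel_measurable (stream_space (measure_pmf p))"
proof (induction k)
  case (Suc k)
  have "(\<lambda>xs. indicator (-A) (shd xs) :: ennreal) \<in> borel_measurable (stream_space (measure_pmf p))"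
    by (rule measurable_compose[OF measurable_shd]) simp
  moreover have "(\<lambda>xs. miss_then A f k (stl xs)) \<in> borel_measurable (stream_space (measure_pmf p))"
    by (rule measurable_compose[OF measurable_stl Suc.IH])
  ultimately show ?case by simp
qed (use assms in simp)

lemma nn_integral_miss_then:
  assumes f: "f \<in> borel_measurable (stream_space (measure_pmf p))"
  shows "(\<integral>\<^sup>+xs. miss_then A f k xs \<partial>stream_space p)
    = emeasure p (-A) ^ k * (\<integral>\<^sup>+xs. f xs \<partial>stream_space p)"
proof (induction k)
  case (Suc k)
  have "(\<integral>\<^sup>+xs. miss_then A f (Suc k) xs \<partial>stream_space p)
      = (\<integral>\<^sup>+x. (\<integral>\<^sup>+xs. miss_then A f (Suc k) (x ## xs) \<partial>stream_space p) \<partial>p)"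
    by (intro prob_space.nn_integral_stream_space prob_space_measure_pmf measurable_miss_then f)
  also have "\<dots> = (\<integral>\<^sup>+x. indicator (-A) x * (\<integral>\<^sup>+xs. miss_then A f k xs \<partial>stream_space p) \<partial>p)"
    using f by (intro nn_integral_cong) (simp add: nn_integral_cmult)
  also have "\<dots> = emeasure p (-A) * (\<integral>\<^sup>+xs. miss_then A f k xs \<partial>stream_space p)"
    by (simp add: nn_integral_multc)
  finally show ?case using Suc.IH by (simp add: mult.assoc)
qed simp

context
  fixes p :: "'a pmf" and A :: "'a set"
  assumes hit: "set_pmf p \<inter> A \<noteq> {}"
begin

lemma emeasure_miss: "emeasure p (-A) = ennreal (1 - measure p A)"
  using measure_pmf.prob_compl[of A p]
  by (simp add: measure_pmf.emeasure_eq_measure Compl_eq_Diff_UNIV)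

lemma measure_hit_pos: "0 < measure p A"
  using hit by (auto intro: measure_pmf_posI)

lemma suminf_miss_powers: "(\<Sum>k. emeasure p (-A) ^ k) = ennreal (1 / measure p A)"
proof -
  have "(\<lambda>k. (1 - measure p A) ^ k) sums (1 / (1 - (1 - measure p A)))"
    using measure_hit_pos by (intro geometric_sums) auto
  then have "(\<Sum>k. ennreal ((1 - measure p A) ^ k)) = ennreal (1 / measure p A)"
    by (intro suminf_ennreal_eq) simp_all
  then show ?thesis
    by (simp add: emeasure_miss ennreal_power)
qed

lemma AE_hits: "AE xs in stream_space p. \<exists>k. xs !! k \<in> A"
proof (rule AE_I')
  have [measurable]: "(\<lambda>x. x \<in> A) \<in> measurable p (count_space UNIV)"
    by simp
  define never where "never = {xs \<in> space (stream_space p). \<forall>k. xs !! k \<notin> A}"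
  have never_sets: "never \<in> sets (stream_space p)"
    unfolding never_def by measurable
  have "emeasure (stream_space p) never \<le> emeasure p (-A) ^ k" for k
  proof -
    have "emeasure (stream_space p) never = (\<integral>\<^sup>+xs. indicator never xs \<partial>stream_space p)"
      using never_sets by simp
    also have "\<dots> \<le> (\<integral>\<^sup>+xs. miss_then A (\<lambda>_. 1) k xs \<partial>stream_space p)"
      by (intro nn_integral_mono) (auto simp: never_def miss_then_before_hit split: split_indicator)
    also have "\<dots> = emeasure p (-A) ^ k"
      by (simp add: nn_integral_miss_then prob_space.emeasure_space_1[OF prob_space_stream_pmf])
    finally show ?thesis .
  qed
  moreover have "(\<lambda>k. ennreal ((1 - measure p A) ^ k)) \<longlonglongrightarrow> ennreal 0"
    using measure_hit_pos by (intro tendsto_ennrealI LIMSEQ_power_zero) auto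
  then have "(\<lambda>k. emeasure p (-A) ^ k) \<longlonglongrightarrow> ennreal 0"
    by (simp add: emeasure_miss ennreal_power)
  ultimately have "emeasure (stream_space p) never \<le> ennreal 0"
    by (intro LIMSEQ_le_const) auto
  then have "emeasure (stream_space p) never = 0"
    by simp
  then show "never \<in> null_sets (stream_space p)"
    using never_sets by auto
qed auto

lemma nn_integral_Suc_hit_time_le:
  "(\<integral>\<^sup>+xs. ennreal (real (Suc (hit_time A xs))) \<partial>stream_space p) \<le> ennreal (1 / measure p A)"
proof -
  have "ennreal (real (Suc (hit_time A xs))) \<le> (\<Sum>k. miss_then A (\<lambda>_. 1) k xs)" for xs
  proof -
    have "miss_then A (\<lambda>_. 1) k xs = 1" if "k < Suc (hit_time A xs)" for k
      using that by (metis miss_then_before_hit hit_time_minimal less_Suc_eq_le order_less_le_trans)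
    then have "ennreal (real (Suc (hit_time A xs))) = (\<Sum>k<Suc (hit_time A xs). miss_then A (\<lambda>_. 1) k xs)"
      by (simp add: ennreal_of_nat_eq_real_of_nat)
    also have "\<dots> \<le> (\<Sum>k. miss_then A (\<lambda>_. 1) k xs)"
      by (rule sum_le_suminf) auto
    finally show ?thesis .
  qed
  then have "(\<integral>\<^sup>+xs. ennreal (real (Suc (hit_time A xs))) \<partial>stream_space p)
      \<le> (\<integral>\<^sup>+xs. (\<Sum>k. miss_then A (\<lambda>_. 1) k xs) \<partial>stream_space p)"
    by (rule nn_integral_mono)
  also have "\<dots> = (\<Sum>k. emeasure p (-A) ^ k)"
    by (simp add: nn_integral_suminf nn_integral_miss_then
        prob_space.emeasure_space_1[OF prob_space_stream_pmf])
  finally show ?thesis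
    by (simp only: suminf_miss_powers)
qed

lemma nn_integral_hit_value:
  "(\<integral>\<^sup>+xs. \<phi> (xs !! hit_time A xs) \<partial>stream_space p) = (\<integral>\<^sup>+x. \<phi> x \<partial>cond_pmf p A)"
proof -
  define f where "f ys = indicator A (shd ys) * \<phi> (shd ys)" for ys
  have f_meas: "f \<in> borel_measurable (stream_space p)"
    unfolding f_def by (rule measurable_compose[OF measurable_shd]) simp
  have "AE xs in stream_space p. \<phi> (xs !! hit_time A xs) = (\<Sum>k. miss_then A f k xs)"
    using AE_hits
  proof eventually_elim
    case (elim xs)
    define K where "K = hit_time A xs"
    have K: "xs !! K \<in> A" "\<And>m. m < K \<Longrightarrow> xs !! m \<notin> A"
      using elim unfolding K_def by (auto simp: hit_time_def intro: LeastI_ex dest: not_less_Least)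
    have "miss_then A f k xs = (if k = K then \<phi> (xs !! K) else 0)" for k
    proof (cases k K rule: linorder_cases)
      case greater
      then have "(\<Prod>m<k. indicator (-A) (xs !! m) :: ennreal) = 0"
        using K(1) by (intro prod_zero bexI[of _ K]) auto
      then show ?thesis
        using greater by (simp add: miss_then_eq)
    qed (use K in \<open>auto simp: miss_then_before_hit f_def\<close>)
    then show ?case
      using sums_single[of K "\<lambda>_. \<phi> (xs !! K)"] by (simp add: sums_iff K_def)
  qed
  then have "(\<integral>\<^sup>+xs. \<phi> (xs !! hit_time A xs) \<partial>stream_space p)
      = (\<Sum>k. (\<integral>\<^sup>+xs. miss_then A f k xs \<partial>stream_space p))"
    by (simp add: nn_integral_cong_AE nn_integral_suminf measurable_miss_then[OF f_meas])
  also have "\<dots> = (\<Sum>k. emeasure p (-A) ^ k) * (\<integral>\<^sup>+x. indicator A x * \<phi> x \<partial>p)"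
  proof -
    have "(\<integral>\<^sup>+ys. f ys \<partial>stream_space p) = (\<integral>\<^sup>+x. indicator A x * \<phi> x \<partial>p)"
      by (subst prob_space.nn_integral_stream_space[OF prob_space_measure_pmf f_meas])
         (simp add: f_def prob_space.emeasure_space_1[OF prob_space_stream_pmf])
    then show ?thesis
      by (simp add: nn_integral_miss_then[OF f_meas] ennreal_suminf_multc)
  qed
  also have "\<dots> = (\<integral>\<^sup>+x. \<phi> x * indicator A x \<partial>p) / emeasure p A"
    using measure_hit_pos unfolding suminf_miss_powers
    by (simp add: measure_pmf.emeasure_eq_measure divide_ennreal_def inverse_ennreal
        inverse_eq_divide mult.commute)
  also have "\<dots> = (\<integral>\<^sup>+x. \<phi> x \<partial>cond_pmf p A)"
    by (simp add: cond_pmf.rep_eq[OF hit] nn_integral_uniform_measure)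
  finally show ?thesis .
qed

end

section \<open>The load process\<close>

lemma ATD_threshold_mono: "s \<le> t \<Longrightarrow> ATD_threshold d s \<le> ATD_threshold d t"
  unfolding ATD_threshold_def by (intro add_right_mono nat_mono ceiling_mono divide_right_mono) auto

lemma ATD_threshold_round:
  assumes "c * d < t" "t \<le> (c + 1) * d"
  shows "ATD_threshold d t = c + 2"
proof -
  have "0 < d"
    using assms by (cases d) auto
  then have "\<lceil>real t / real d\<rceil> = int (c + 1)"
    using assms by (intro ceiling_unique) (simp_all add: field_simps flip: of_nat_mult of_nat_add)
  then show ?thesis
    unfolding ATD_threshold_def by simp
qed

lemma ATD_threshold_le:
  assumes "0 < d" "t \<le> c * d"
  shows "ATD_threshold d t \<le> c + 1"
proof -
  have "\<lceil>real t / real d\<rceil> \<le> int c"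
    using assms by (simp add: ceiling_le_iff divide_le_eq flip: of_nat_mult)
  then show ?thesis
    unfolding ATD_threshold_def by linarith
qed

lemma less_mult_ATD_threshold:
  assumes "0 < d"
  shows "t < d * ATD_threshold d t"
proof -
  have "real t \<le> of_int \<lceil>real t / real d\<rceil> * real d"
    using assms by (metis divide_le_eq le_of_int_ceiling of_nat_0_less_iff)
  then have "real t \<le> real (nat \<lceil>real t / real d\<rceil>) * real d"
    by simp
  then have "t \<le> d * nat \<lceil>real t / real d\<rceil>"
    by (metis of_nat_le_iff of_nat_mult mult.commute)
  then show ?thesis
    using assms unfolding ATD_threshold_def by simp
qed

definition suitable :: "nat \<Rightarrow> nat \<Rightarrow> (nat \<Rightarrow> nat) \<Rightarrow> nat set" where
  "suitable d th L = {j. j < d \<and> L j < th}"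

definition incr :: "(nat \<Rightarrow> nat) \<Rightarrow> nat \<Rightarrow> nat \<Rightarrow> nat" where
  "incr L j = L(j := Suc (L j))"

lemma suitable_iff: "j \<in> suitable d th L \<longleftrightarrow> j < d \<and> L j < th"
  by (simp add: suitable_def)

lemma finite_suitable [simp]: "finite (suitable d th L)"
  by (simp add: suitable_def)

lemma suitable_subset: "suitable d th L \<subseteq> {..<d}"
  by (auto simp: suitable_def)

lemma card_suitable_le: "card (suitable d th L) \<le> d"
  using card_mono[OF _ suitable_subset] by fastforce

lemma incr_same [simp]: "incr L j j = Suc (L j)"
  by (simp add: incr_def)

lemma incr_other [simp]: "k \<noteq> j \<Longrightarrow> incr L j k = L k"
  by (simp add: incr_def)

lemma sum_incr:
  assumes "j < d"
  shows "(\<Sum>k<d. incr L j k) = Suc (\<Sum>k<d. L k)"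
  using assms by (simp add: incr_def sum.If_cases Int_absorb1 sum.remove flip: Diff_eq)

lemma ATD_nsamples_eq: "ATD_nsamples d L t xs = Suc (hit_time (suitable d (ATD_threshold d t) L) xs)"
  by (simp add: ATD_nsamples_def ATD_suitable_def suitable_iff hit_time_def)

lemma ATD_pick_eq: "ATD_pick d L t xs = xs !! hit_time (suitable d (ATD_threshold d t) L) xs"
  by (simp add: ATD_pick_def ATD_suitable_def suitable_iff hit_time_def)

context
  fixes d :: nat and A :: "nat set"
  assumes A: "A \<subseteq> {..<d}" "A \<noteq> {}"
begin

lemma set_pmf_uniform_Int_nonempty: "set_pmf (pmf_of_set {..<d}) \<inter> A \<noteq> {}"
  using A by (subst set_pmf_of_set) auto

lemma nn_integral_Suc_hit_time_uniform_le:
  "(\<integral>\<^sup>+xs. ennreal (real (Suc (hit_time A xs))) \<partial>stream_space (pmf_of_set {..<d}))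
    \<le> ennreal (real d / real (card A))"
  using nn_integral_Suc_hit_time_le[OF set_pmf_uniform_Int_nonempty] A
  by (subst (asm) measure_pmf_of_set) (auto simp: Int_absorb1)

lemma nn_integral_hit_value_uniform:
  "(\<integral>\<^sup>+xs. \<phi> (xs !! hit_time A xs) \<partial>stream_space (pmf_of_set {..<d})) = (\<integral>\<^sup>+x. \<phi> x \<partial>pmf_of_set A)"
  using A by (simp add: nn_integral_hit_value[OF set_pmf_uniform_Int_nonempty] cond_pmf_of_set Int_absorb2)

end

definition load_step :: "nat \<Rightarrow> nat \<Rightarrow> (nat \<Rightarrow> nat) \<Rightarrow> (nat \<Rightarrow> nat) pmf" where
  "load_step d th L = map_pmf (incr L) (pmf_of_set (suitable d th L))"

fun load_pmf :: "nat \<Rightarrow> nat \<Rightarrow> (nat \<Rightarrow> nat) pmf" where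
  "load_pmf d 0 = return_pmf (\<lambda>_. 0)"
| "load_pmf d (Suc 0) = return_pmf (\<lambda>_. 0)"
| "load_pmf d (Suc (Suc m)) = load_pmf d (Suc m) \<bind> load_step d (ATD_threshold d (Suc m))"

lemma suitable_nonempty:
  assumes "0 < d" "(\<Sum>j<d. L j) = t - 1"
  shows "suitable d (ATD_threshold d t) L \<noteq> {}"
proof
  assume "suitable d (ATD_threshold d t) L = {}"
  then have "(\<Sum>j<d. ATD_threshold d t) \<le> (\<Sum>j<d. L j)"
    unfolding suitable_def by (intro sum_mono) auto
  then show False
    using assms less_mult_ATD_threshold[OF assms(1), of t] by simp
qed

lemma set_load_pmf:
  "0 < d \<Longrightarrow> L \<in> set_pmf (load_pmf d t) \<Longrightarrow>
    (\<Sum>j<d. L j) = t - 1 \<and> (\<forall>j. L j \<le> ATD_threshold d (t - 1))"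
proof (induction d t arbitrary: L rule: load_pmf.induct)
  case (3 d m)
  then obtain L' where L': "L' \<in> set_pmf (load_pmf d (Suc m))"
    and "L \<in> set_pmf (load_step d (ATD_threshold d (Suc m)) L')"
    by auto
  moreover have IH: "(\<Sum>j<d. L' j) = m" "\<And>j. L' j \<le> ATD_threshold d m"
    using "3.IH"[OF "3.prems"(1) L'] by auto
  moreover have "suitable d (ATD_threshold d (Suc m)) L' \<noteq> {}"
    using suitable_nonempty "3.prems"(1) IH(1) by simp
  ultimately obtain j where L: "L = incr L' j" and j: "j \<in> suitable d (ATD_threshold d (Suc m)) L'"
    by (auto simp: load_step_def)
  have "L k \<le> ATD_threshold d (Suc m)" for k
    using IH(2)[of k] j L ATD_threshold_mono[of m "Suc m" d]
    by (cases "k = j") (auto simp: suitable_iff)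
  then show ?case
    using IH(1) j L by (simp add: sum_incr suitable_iff)
qed auto

lemma suitable_load_nonempty:
  "0 < d \<Longrightarrow> L \<in> set_pmf (load_pmf d t) \<Longrightarrow> suitable d (ATD_threshold d t) L \<noteq> {}"
  using set_load_pmf suitable_nonempty by blast

lemma nn_integral_load_step:
  assumes "suitable d th L \<noteq> {}"
  shows "(\<integral>\<^sup>+xs. G (incr L (xs !! hit_time (suitable d th L) xs)) \<partial>stream_space (pmf_of_set {..<d}))
    = (\<integral>\<^sup>+L'. G L' \<partial>load_step d th L)"
  by (simp add: nn_integral_hit_value_uniform[OF suitable_subset assms, of "\<lambda>j. G (incr L j)"]
      load_step_def)

lemma prob_space_ATD_space: "prob_space (ATD_space d)"
  unfolding ATD_space_def by (rule prob_space.prob_space_stream_space[OF prob_space_stream_pmf])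

lemma measurable_ATD_pick [measurable]:
  "ATD_pick d L t \<in> measurable (stream_space (measure_pmf p)) (count_space UNIV)"
  unfolding ATD_pick_eq[abs_def] by (rule measurable_hit_value)

lemma nn_integral_ATD_L:
  "0 < d \<Longrightarrow> (\<And>L. g L \<in> borel_measurable (ATD_space d)) \<Longrightarrow>
    (\<integral>\<^sup>+\<omega>. g (ATD_L d \<omega> t) (sdrop t \<omega>) \<partial>ATD_space d)
      = (\<integral>\<^sup>+L. \<integral>\<^sup>+\<omega>. g L \<omega> \<partial>ATD_space d \<partial>load_pmf d t)"
proof (induction d t arbitrary: g rule: load_pmf.induct)
  case (2 d)
  then show ?case
    unfolding ATD_space_def by (simp add: nn_integral_stl[OF prob_space_stream_pmf])
next
  case (3 d m)
  define h where "h L \<omega> = g (incr L (ATD_pick d L (Suc m) (shd \<omega>))) (stl \<omega>)" for L \<omega>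
  have h_meas: "h L \<in> borel_measurable (ATD_space d)" for L
    unfolding h_def ATD_space_def
    by (rule measurable_compose_countable'[where f="\<lambda>j \<omega>. g (incr L j) (stl \<omega>)" and I=UNIV])
       (use "3.prems"(2) in \<open>auto simp: ATD_space_def intro: measurable_compose[OF measurable_stl]
          measurable_compose[OF measurable_shd measurable_ATD_pick]\<close>)
  have "(\<integral>\<^sup>+\<omega>. g (ATD_L d \<omega> (Suc (Suc m))) (sdrop (Suc (Suc m)) \<omega>) \<partial>ATD_space d)
      = (\<integral>\<^sup>+\<omega>. h (ATD_L d \<omega> (Suc m)) (sdrop (Suc m) \<omega>) \<partial>ATD_space d)"
    by (simp add: h_def incr_def Let_def)
  also have "\<dots> = (\<integral>\<^sup>+L. \<integral>\<^sup>+\<omega>. h L \<omega> \<partial>ATD_space d \<partial>load_pmf d (Suc m))"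
    using "3.IH"[OF "3.prems"(1) h_meas] .
  also have "\<dots> = (\<integral>\<^sup>+L. \<integral>\<^sup>+L'. \<integral>\<^sup>+\<omega>. g L' \<omega> \<partial>ATD_space d
      \<partial>load_step d (ATD_threshold d (Suc m)) L \<partial>load_pmf d (Suc m))"
  proof (intro nn_integral_cong_AE AE_pmfI)
    fix L assume "L \<in> set_pmf (load_pmf d (Suc m))"
    then have "suitable d (ATD_threshold d (Suc m)) L \<noteq> {}"
      by (rule suitable_load_nonempty[OF "3.prems"(1)])
    note step = nn_integral_load_step[OF this, of "\<lambda>L'. \<integral>\<^sup>+\<omega>. g L' \<omega> \<partial>ATD_space d"]
    show "(\<integral>\<^sup>+\<omega>. h L \<omega> \<partial>ATD_space d) = (\<integral>\<^sup>+L'. \<integral>\<^sup>+\<omega>. g L' \<omega> \<partial>ATD_space d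
        \<partial>load_step d (ATD_threshold d (Suc m)) L)"
      unfolding ATD_space_def
      by (subst prob_space.nn_integral_stream_space[OF prob_space_stream_pmf
          h_meas[unfolded ATD_space_def]]) (simp add: h_def ATD_pick_eq step[unfolded ATD_space_def])
  qed
  finally show ?case
    by simp
qed simp

lemma nn_integral_ATD_nsamples_le:
  assumes "0 < d"
  shows "(\<integral>\<^sup>+\<omega>. ennreal (real (ATD_nsamples d (ATD_L d \<omega> t) t (\<omega> !! t))) \<partial>ATD_space d)
    \<le> (\<integral>\<^sup>+L. ennreal (real d / real (card (suitable d (ATD_threshold d t) L))) \<partial>load_pmf d t)"
proof -
  define g where "g L \<omega> = ennreal (real (ATD_nsamples d L t (shd \<omega>)))" for L \<omega>
  have g_meas: "g L \<in> borel_measurable (ATD_space d)" for L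
    unfolding g_def ATD_space_def ATD_nsamples_eq
    by (intro measurable_compose[OF measurable_shd] measurable_compose[OF measurable_hit_time]) simp
  have "(\<integral>\<^sup>+\<omega>. ennreal (real (ATD_nsamples d (ATD_L d \<omega> t) t (\<omega> !! t))) \<partial>ATD_space d)
      = (\<integral>\<^sup>+L. \<integral>\<^sup>+\<omega>. g L \<omega> \<partial>ATD_space d \<partial>load_pmf d t)"
    using nn_integral_ATD_L[OF assms g_meas] by (simp add: g_def)
  also have "\<dots> \<le> (\<integral>\<^sup>+L. ennreal (real d / real (card (suitable d (ATD_threshold d t) L))) \<partial>load_pmf d t)"
  proof (intro nn_integral_mono_AE AE_pmfI)
    fix L assume "L \<in> set_pmf (load_pmf d t)"
    then have "suitable d (ATD_threshold d t) L \<noteq> {}"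
      by (rule suitable_load_nonempty[OF assms])
    then show "(\<integral>\<^sup>+\<omega>. g L \<omega> \<partial>ATD_space d) \<le> ennreal (real d / real (card (suitable d (ATD_threshold d t) L)))"
      using g_meas[of L] nn_integral_Suc_hit_time_uniform_le[OF suitable_subset]
      unfolding ATD_space_def
      by (simp add: prob_space.nn_integral_stream_space[OF prob_space_stream_pmf]
          prob_space.emeasure_space_1[OF prob_space_ATD_space, unfolded ATD_space_def]
          g_def ATD_nsamples_eq)
  qed
  finally show ?thesis .
qed

lemma capacity_incr:
  assumes "j \<in> suitable d th L"
  shows "(\<Sum>k<d. th - incr L j k) + 1 = (\<Sum>k<d. th - L k)"
proof -
  have "j < d" "L j < th"
    using assms by (auto simp: suitable_iff)
  then show ?thesis
    by (simp add: incr_def sum.If_cases Int_absorb1 sum.remove flip: Diff_eq)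
qed

lemma suitable_nonempty_capacity:
  assumes "0 < (\<Sum>k<d. th - L k)"
  shows "suitable d th L \<noteq> {}"
proof
  assume "suitable d th L = {}"
  then have "\<forall>k\<in>{..<d}. th - L k = 0"
    by (auto simp: suitable_def)
  then show False
    using assms by simp
qed

lemma capacity_sum:
  fixes L :: "nat \<Rightarrow> nat"
  assumes "\<forall>j<d. L j \<le> th"
  shows "(\<Sum>j<d. th - L j) + (\<Sum>j<d. L j) = d * th"
  using assms by (simp flip: sum.distrib)

(* One step at the fixed threshold th: the suitable mini-deck j receives the next card with
   probability w L j; iter_exp n g L is the expectation of g after n steps started at L. *)
locale load_kernel =
  fixes d th :: nat and w :: "(nat \<Rightarrow> nat) \<Rightarrow> nat \<Rightarrow> real"
  assumes weight_nonneg: "0 \<le> w L j"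
    and weight_sum: "suitable d th L \<noteq> {} \<Longrightarrow> (\<Sum>j\<in>suitable d th L. w L j) = 1"
begin

definition step_exp :: "(nat \<Rightarrow> nat) \<Rightarrow> ((nat \<Rightarrow> nat) \<Rightarrow> real) \<Rightarrow> real" where
  "step_exp L g = (\<Sum>j\<in>suitable d th L. w L j * g (incr L j))"

primrec iter_exp :: "nat \<Rightarrow> ((nat \<Rightarrow> nat) \<Rightarrow> real) \<Rightarrow> (nat \<Rightarrow> nat) \<Rightarrow> real" where
  "iter_exp 0 g = g"
| "iter_exp (Suc n) g = (\<lambda>L. step_exp L (iter_exp n g))"

lemma step_exp_cong:
  "(\<And>j. j \<in> suitable d th L \<Longrightarrow> g (incr L j) = h (incr L j)) \<Longrightarrow> step_exp L g = step_exp L h"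
  unfolding step_exp_def by (intro sum.cong) auto

lemma step_exp_mono:
  "(\<And>j. j \<in> suitable d th L \<Longrightarrow> g (incr L j) \<le> h (incr L j)) \<Longrightarrow> step_exp L g \<le> step_exp L h"
  unfolding step_exp_def by (intro sum_mono mult_left_mono weight_nonneg)

lemma step_exp_nonneg:
  "(\<And>j. j \<in> suitable d th L \<Longrightarrow> 0 \<le> g (incr L j)) \<Longrightarrow> 0 \<le> step_exp L g"
  unfolding step_exp_def by (intro sum_nonneg mult_nonneg_nonneg weight_nonneg)

lemma step_exp_add: "step_exp L (\<lambda>x. g x + h x) = step_exp L g + step_exp L h"
  unfolding step_exp_def by (simp add: sum.distrib distrib_left)

lemma step_exp_cmult: "step_exp L (\<lambda>x. c * g x) = c * step_exp L g"
  unfolding step_exp_def by (simp add: sum_distrib_left mult.left_commute)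

lemma step_exp_sum: "step_exp L (\<lambda>x. \<Sum>k\<in>A. g k x) = (\<Sum>k\<in>A. step_exp L (g k))"
  unfolding step_exp_def by (simp add: sum.swap[of _ A] sum_distrib_left)

lemma step_exp_const: "suitable d th L \<noteq> {} \<Longrightarrow> step_exp L (\<lambda>_. c) = c"
  unfolding step_exp_def by (simp add: weight_sum flip: sum_distrib_right)

lemma step_exp_le_const:
  assumes "0 \<le> c" "\<And>j. j \<in> suitable d th L \<Longrightarrow> g (incr L j) \<le> c"
  shows "step_exp L g \<le> c"
proof (cases "suitable d th L = {}")
  case False
  then show ?thesis
    using step_exp_mono[of L g "\<lambda>_. c"] assms by (simp add: step_exp_const)
qed (use assms in \<open>simp add: step_exp_def\<close>)

lemma iter_exp_mono_inv:
  assumes "\<And>L j. P L \<Longrightarrow> j \<in> suitable d th L \<Longrightarrow> P (incr L j)"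
    and "\<And>L. P L \<Longrightarrow> g L \<le> h L" and "P L"
  shows "iter_exp n g L \<le> iter_exp n h L"
  using assms(3) by (induction n arbitrary: L) (auto intro!: step_exp_mono assms(1,2))

lemma iter_exp_mono: "(\<And>L. g L \<le> h L) \<Longrightarrow> iter_exp n g L \<le> iter_exp n h L"
  using iter_exp_mono_inv[where P="\<lambda>_. True"] by blast

lemma iter_exp_nonneg: "(\<And>L. 0 \<le> g L) \<Longrightarrow> 0 \<le> iter_exp n g L"
  by (induction n arbitrary: L) (auto intro!: step_exp_nonneg)

lemma iter_exp_le_const_inv:
  assumes "0 \<le> c" "\<And>L. P L \<Longrightarrow> g L \<le> c"
    and "\<And>L j. P L \<Longrightarrow> j \<in> suitable d th L \<Longrightarrow> P (incr L j)" and "P L"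
  shows "iter_exp n g L \<le> c"
  using assms(4) by (induction n arbitrary: L) (auto intro!: step_exp_le_const assms(1-3))

lemma iter_exp_le_const: "0 \<le> c \<Longrightarrow> (\<And>L. g L \<le> c) \<Longrightarrow> iter_exp n g L \<le> c"
  using iter_exp_le_const_inv[where P="\<lambda>_. True"] by blast

lemma iter_exp_add: "iter_exp n (\<lambda>x. g x + h x) L = iter_exp n g L + iter_exp n h L"
  by (induction n arbitrary: L) (simp_all add: step_exp_add cong: step_exp_cong)

lemma iter_exp_cmult: "iter_exp n (\<lambda>x. c * g x) L = c * iter_exp n g L"
  by (induction n arbitrary: L) (simp_all add: step_exp_cmult cong: step_exp_cong)

lemma iter_exp_sum:
  "finite A \<Longrightarrow> iter_exp n (\<lambda>x. \<Sum>k\<in>A. g k x) L = (\<Sum>k\<in>A. iter_exp n (g k) L)"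
  by (induction A rule: finite_induct) (simp_all add: iter_exp_add iter_exp_cmult[of n 0, simplified])

lemma iter_exp_const:
  "n \<le> (\<Sum>k<d. th - L k) \<Longrightarrow> iter_exp n (\<lambda>_. c) L = c"
proof (induction n arbitrary: L)
  case (Suc n)
  have "step_exp L (iter_exp n (\<lambda>_. c)) = step_exp L (\<lambda>_. c)"
    using Suc capacity_incr by (intro step_exp_cong Suc.IH) (metis Suc_le_mono add.commute plus_1_eq_Suc)
  also have "\<dots> = c"
    using Suc.prems by (intro step_exp_const suitable_nonempty_capacity) simp
  finally show ?case
    by simp
qed simp

lemma iter_exp_Suc': "iter_exp (Suc n) g = iter_exp n (\<lambda>L. step_exp L g)"
proof
  show "iter_exp (Suc n) g L = iter_exp n (\<lambda>L. step_exp L g) L" for L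
    by (induction n arbitrary: L) (simp_all cong: step_exp_cong)
qed

lemma integrable_iter_exp:
  assumes "\<And>L. 0 \<le> g L" "\<And>L. g L \<le> B"
  shows "integrable (measure_pmf p) (iter_exp n g)"
  using assms order.trans[OF assms]
  by (intro integrable_bounded_pmf[where B=B] iter_exp_nonneg iter_exp_le_const) auto

lemma iter_exp_le_self:
  assumes "\<And>L. 0 \<le> g L" and "\<And>L j. j \<in> suitable d th L \<Longrightarrow> g (incr L j) \<le> g L"
  shows "iter_exp n g L \<le> g L"
proof (induction n arbitrary: L)
  case (Suc n)
  then show ?case
    using assms by (auto intro!: step_exp_le_const order.trans[OF Suc.IH])
qed simp

end

definition unif_weight :: "nat \<Rightarrow> nat \<Rightarrow> (nat \<Rightarrow> nat) \<Rightarrow> nat \<Rightarrow> real" where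
  "unif_weight d th L j = 1 / real (card (suitable d th L))"

global_interpretation unif: load_kernel d th "unif_weight d th" for d th
  by unfold_locales (simp_all add: unif_weight_def card_gt_0_iff)

lemma expectation_load_step:
  "suitable d th L \<noteq> {} \<Longrightarrow> measure_pmf.expectation (load_step d th L) g = unif.step_exp d th L g"
  by (simp add: load_step_def integral_pmf_of_set unif.step_exp_def unif_weight_def sum_divide_distrib)

lemma expectation_load_pmf_add:
  assumes "0 < d" "1 \<le> t" "\<And>m. m < n \<Longrightarrow> ATD_threshold d (t + m) = th"
    and "\<And>L. 0 \<le> g L" "\<And>L. g L \<le> B"
  shows "measure_pmf.expectation (load_pmf d (t + n)) g
    = measure_pmf.expectation (load_pmf d t) (unif.iter_exp d th n g)"
  using assms(3-5)
proof (induction n arbitrary: g)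
  case (Suc n)
  obtain k where k: "t + n = Suc k"
    using assms(2) by (cases "t + n") auto
  have step_bounds: "0 \<le> unif.step_exp d th L g" "unif.step_exp d th L g \<le> B" for L
    using Suc.prems(2,3) order.trans[OF Suc.prems(2,3)]
    by (auto intro!: unif.step_exp_nonneg unif.step_exp_le_const)
  have "measure_pmf.expectation (load_pmf d (t + Suc n)) g
      = measure_pmf.expectation (load_pmf d (t + n)) (\<lambda>L. measure_pmf.expectation (load_step d th L) g)"
    using Suc.prems(1)[of n] Suc.prems(2,3) k by (simp add: expectation_bind_pmf[where B=B])
  also have "\<dots> = measure_pmf.expectation (load_pmf d (t + n)) (\<lambda>L. unif.step_exp d th L g)"
    using suitable_load_nonempty[OF assms(1), of _ "t + n"] Suc.prems(1)[of n]
    by (intro integral_cong_AE) (auto simp: AE_measure_pmf_iff expectation_load_step)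
  also have "\<dots> = measure_pmf.expectation (load_pmf d t) (unif.iter_exp d th (Suc n) g)"
    using Suc.prems(1) step_bounds by (simp add: Suc.IH unif.iter_exp_Suc' del: unif.iter_exp.simps)
  finally show ?case .
qed simp

lemma tilted_step_factor_le:
  fixes s d q A Y :: real
  assumes s: "1 \<le> s" "s \<le> d" and q: "0 \<le> q" "q \<le> 1" and A: "0 \<le> A" and Y: "0 \<le> Y" "Y \<le> 1"
  shows "(1 - q / s) * (A * (1 - Y / 2)) \<le> (1 - q / d) * A * (1 - (q * (d - s) / d\<^sup>2 + Y) / 2)"
proof -
  define x where "x = q * (d - s) / d\<^sup>2"
  have d: "0 < d"
    using s by linarith
  have x: "0 \<le> x"
    using s q by (simp add: x_def)
  have "(2 * d - s) * s \<le> d\<^sup>2"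
    using zero_le_power2[of "d - s"] by (simp add: power2_eq_square algebra_simps)
  then have "q * ((2 * d - s) / d\<^sup>2) \<le> q * (1 / s)"
    using d s q by (intro mult_left_mono) (simp_all add: field_simps)
  moreover have "(1 - q / d) * (1 - x) = 1 - q * ((2 * d - s) / d\<^sup>2) + q * (q * (d - s) / d ^ 3)"
    using d by (simp add: x_def field_simps power2_eq_square power3_eq_cube)
  moreover have "0 \<le> q * (q * (d - s) / d ^ 3)"
    using s q d by simp
  ultimately have "1 - q / s \<le> (1 - q / d) * (1 - x)"
    by simp
  then have "(1 - q / s) * (A * (1 - Y / 2)) \<le> ((1 - q / d) * (1 - x)) * (A * (1 - Y / 2))"
    using A Y by (intro mult_right_mono) auto
  also have "\<dots> = (1 - q / d) * A * ((1 - x) * (1 - Y / 2))"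
    by (simp only: ac_simps)
  also have "\<dots> \<le> (1 - q / d) * A * (1 - (x + Y) / 2)"
  proof (rule mult_left_mono)
    have "x * Y \<le> x"
      using x Y mult_left_le by blast
    moreover have "(1 - x) * (1 - Y / 2) = 1 - (x + Y) / 2 - x / 2 + x * Y / 2"
      by (simp add: field_simps)
    ultimately show "(1 - x) * (1 - Y / 2) \<le> 1 - (x + Y) / 2"
      by linarith
    have "q / d \<le> 1"
      using s q d by (simp add: field_simps)
    then show "0 \<le> (1 - q / d) * A"
      using A by simp
  qed
  finally show ?thesis
    by (simp add: x_def)
qed

lemma power_one_minus_le_inverse:
  fixes p E :: real
  assumes "0 \<le> p" "p \<le> 1" "0 < E" "E \<le> (1 + p) ^ n"
  shows "(1 - p) ^ n \<le> 1 / E"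
proof -
  have "(1 - p) ^ n * E \<le> (1 - p) ^ n * (1 + p) ^ n"
    using assms by (intro mult_left_mono) auto
  also have "\<dots> = (1 - p\<^sup>2) ^ n"
    by (simp add: power2_eq_square algebra_simps flip: power_mult_distrib)
  also have "\<dots> \<le> 1"
    using assms by (intro power_le_one) (auto simp: power2_eq_square mult_le_one)
  finally show ?thesis
    using assms(3) by (simp add: field_simps)
qed

lemma binomial_second_order_le:
  fixes p :: real
  assumes "0 \<le> p"
  shows "1 + real n * p + real n * (real n - 1) / 2 * p\<^sup>2 \<le> (1 + p) ^ n"
proof (induction n)
  case (Suc n)
  define a where "a = real n * (real n - 1) / 2"
  have "0 \<le> a * p ^ 3"
    using assms by (cases n) (auto simp: a_def)
  moreover have "real (Suc n) * (real (Suc n) - 1) / 2 = a + real n"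
    by (simp add: a_def field_simps)
  moreover have "(1 + real n * p + a * p\<^sup>2) * (1 + p)
      = 1 + (1 + real n) * p + (a + real n) * p\<^sup>2 + a * p ^ 3"
    by (simp add: algebra_simps power2_eq_square power3_eq_cube)
  ultimately have "1 + real (Suc n) * p + real (Suc n) * (real (Suc n) - 1) / 2 * p\<^sup>2
      \<le> (1 + real n * p + a * p\<^sup>2) * (1 + p)"
    by (simp only: of_nat_Suc)
  also have "\<dots> \<le> (1 + p) ^ n * (1 + p)"
    using Suc assms by (intro mult_right_mono) (auto simp: a_def)
  finally show ?case
    by (simp add: mult.commute)
qed simp

definition binomial_le_1 :: "real \<Rightarrow> nat \<Rightarrow> real" where
  "binomial_le_1 p n = (1 - p) ^ n + real n * p * (1 - p) ^ (n - 1)"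

lemma binomial_le_1_Suc: "binomial_le_1 p (Suc n) = (1 - p) * binomial_le_1 p n + p * (1 - p) ^ n"
  by (cases n) (simp_all add: binomial_le_1_def algebra_simps)

lemma power_le_binomial_le_1: "0 \<le> p \<Longrightarrow> p \<le> 1 \<Longrightarrow> (1 - p) ^ n \<le> binomial_le_1 p n"
  by (simp add: binomial_le_1_def)

lemma one_minus_inverse_power_le:
  assumes "16 \<le> d" "d \<le> 2 * t"
  shows "(1 - 1 / real d) ^ t \<le> 29 / 30"
proof -
  define p where "p = 1 / real d"
  have p: "0 \<le> p" "p \<le> 1" "1 / 2 \<le> real t * p"
    using assms by (auto simp: p_def field_simps)
  have "(1 - p) ^ t \<le> 1 / (1 + real t * p)"
    using p Bernoulli_inequality[of p t] by (intro power_one_minus_le_inverse) auto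
  also have "\<dots> \<le> 1 / (1 + 1 / 2)"
    using p by (intro divide_left_mono) auto
  finally show ?thesis
    by (simp add: p_def)
qed

lemma binomial_le_1_le:
  assumes "16 \<le> d" "d \<le> 2 * t" "t < d"
  shows "binomial_le_1 (1 / real d) t \<le> 59 / 60"
proof -
  define p where "p = 1 / real d"
  define R where "R = real (t - 1)"
  have p: "0 \<le> p" "p \<le> 1"
    using assms by (auto simp: p_def)
  have B: "binomial_le_1 p t = (1 - p) ^ (t - 1) * (1 + R * p)"
    using assms by (cases t) (simp_all add: binomial_le_1_def R_def algebra_simps)
  have Rp: "0 \<le> R * p" "R * p \<le> 1"
    using assms p by (auto simp: R_def p_def field_simps)
  have "(7 * real d / 16) * (3 * real d / 8) \<le> R * (R - 1)"
    using assms by (intro mult_mono) (auto simp: R_def)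
  then have "(7 * real d / 16) * (3 * real d / 8) * p\<^sup>2 \<le> R * (R - 1) * p\<^sup>2"
    by (intro mult_right_mono) auto
  moreover have "(7 * real d / 16) * (3 * real d / 8) * p\<^sup>2 = 21 / 128"
    using assms by (simp add: p_def power2_eq_square)
  ultimately have key: "21 / 128 \<le> R * (R - 1) * p\<^sup>2"
    by simp
  define E where "E = 1 + R * p + R * (R - 1) / 2 * p\<^sup>2"
  define X where "X = R * (R - 1) * p\<^sup>2"
  have E_eq: "E = 1 + R * p + X / 2"
    by (simp add: E_def X_def)
  have X: "21 / 128 \<le> X"
    using key by (simp add: X_def)
  have E: "0 < E" "60 * (1 + R * p) \<le> 59 * E"
    using X Rp unfolding E_eq by (linarith, simp add: algebra_simps)
  have "(1 - p) ^ (t - 1) \<le> 1 / E"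
    using p binomial_second_order_le[OF p(1), of "t - 1"] E
    by (intro power_one_minus_le_inverse) (auto simp: E_def R_def)
  then have "binomial_le_1 p t \<le> (1 / E) * (1 + R * p)"
    unfolding B using Rp by (intro mult_right_mono) auto
  also have "\<dots> \<le> 59 / 60"
    using E by (simp add: field_simps)
  finally show ?thesis
    by (simp add: p_def)
qed

(* A mini-deck with spare capacity 1 (resp. 2) is full during the second half of a round with
   probability at least 1/30 (resp. 1/60): fill_weight is this bound in units of 1/60. *)
definition fill_weight :: "nat \<Rightarrow> (nat \<Rightarrow> nat) \<Rightarrow> nat \<Rightarrow> real" where
  "fill_weight th L j = 2 * (if th - L j = 1 then 1 else 0) + (if th - L j = 2 then 1 else 0)"

lemma spare_capacity_count:
  fixes L :: "nat \<Rightarrow> nat"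
  assumes "i < d" "\<forall>j<d. L j < th" "(\<Sum>j<d. th - L j) = 2 * d" "2 \<le> th - L i"
  shows "real d - 1 \<le> (\<Sum>j\<in>{..<d} - {i}. fill_weight th L j)"
proof -
  have "(\<Sum>j<d. real (th - L j)) = 2 * real d"
    using arg_cong[OF assms(3), of real] by simp
  then have "(\<Sum>j\<in>{..<d} - {i}. real (th - L j)) \<le> 2 * real d - 2"
    using assms(1,4) by (simp add: sum.remove)
  then have "real d - 1 \<le> (\<Sum>j\<in>{..<d} - {i}. 3 - real (th - L j))"
    using assms(1) by (simp add: sum_subtractf of_nat_diff)
  also have "\<dots> \<le> (\<Sum>j\<in>{..<d} - {i}. fill_weight th L j)"
    unfolding fill_weight_def
  proof (rule sum_mono)
    fix j assume "j \<in> {..<d} - {i}"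
    then have "1 \<le> th - L j"
      using assms(2) by fastforce
    then show "3 - real (th - L j) \<le> 2 * (if th - L j = 1 then 1 else 0) + (if th - L j = 2 then 1 else 0)"
      by (cases "th - L j = 1"; cases "th - L j = 2") auto
  qed
  finally show ?thesis .
qed

lemma sum_mult_if_eq:
  fixes w :: "'a \<Rightarrow> real"
  assumes "finite A" "j \<in> A"
  shows "(\<Sum>k\<in>A. w k * (if k = j then a else b)) = b * (\<Sum>k\<in>A. w k) + (a - b) * w j"
proof -
  have "(\<Sum>k\<in>A. w k * (if k = j then a else b)) = (\<Sum>k\<in>A. b * w k + (if k = j then (a - b) * w k else 0))"
    by (intro sum.cong) (auto simp: algebra_simps)
  then show ?thesis
    using assms by (simp add: sum.distrib sum_distrib_left)
qed

section \<open>Exponential tilting\<close>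

definition open_ind :: "nat \<Rightarrow> nat \<Rightarrow> (nat \<Rightarrow> nat) \<Rightarrow> real" where
  "open_ind th j L = (if L j < th then 1 else 0)"

lemma card_suitable_eq_sum_open_ind: "real (card (suitable d th L)) = (\<Sum>j<d. open_ind th j L)"
proof -
  have "suitable d th L = {..<d} \<inter> {j. L j < th}"
    by (auto simp: suitable_def)
  then show ?thesis
    by (simp add: open_ind_def sum.If_cases)
qed

(* The step with uniform weights, reweighted by the factor mu whenever mini-deck i is chosen;
   incr_mgf below collects the normalising factors (step_exp_power_incr_mgf). *)
definition tilt_weight :: "nat \<Rightarrow> nat \<Rightarrow> real \<Rightarrow> nat \<Rightarrow> (nat \<Rightarrow> nat) \<Rightarrow> nat \<Rightarrow> real" where
  "tilt_weight d th mu i L j =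
    (if i \<in> suitable d th L
     then (if j = i then mu else 1) / (real (card (suitable d th L)) - (1 - mu))
     else 1 / real (card (suitable d th L)))"

lemma card_suitable_ge_1: "j \<in> suitable d th L \<Longrightarrow> 1 \<le> real (card (suitable d th L))"
  using card_gt_0_iff[of "suitable d th L"] by fastforce

definition round_factor :: "nat \<Rightarrow> real \<Rightarrow> real" where
  "round_factor d mu = (1 - (1 - mu) / real d) ^ d * (1 - (1 - mu) / 480)"

lemma round_factor_nonneg: "1 \<le> d \<Longrightarrow> 0 \<le> mu \<Longrightarrow> mu \<le> 1 \<Longrightarrow> 0 \<le> round_factor d mu"
  by (simp add: round_factor_def field_simps)

locale tilted =
  fixes d th :: nat and mu :: real and i :: nat
  assumes mu_pos: "0 < mu" and mu_le_1: "mu \<le> 1"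
begin

lemma tilt_weight_in:
  "i \<in> suitable d th L \<Longrightarrow>
    tilt_weight d th mu i L j = (if j = i then mu else 1) / (real (card (suitable d th L)) - (1 - mu))"
  by (simp add: tilt_weight_def)

lemma tilt_weight_nonneg: "0 \<le> tilt_weight d th mu i L j"
proof (cases "i \<in> suitable d th L")
  case True
  then have "0 < real (card (suitable d th L)) - (1 - mu)"
    using card_suitable_ge_1 mu_pos by fastforce
  then show ?thesis
    using True mu_pos by (simp add: tilt_weight_in)
qed (simp add: tilt_weight_def)

lemma tilt_weight_sum:
  assumes "suitable d th L \<noteq> {}"
  shows "(\<Sum>j\<in>suitable d th L. tilt_weight d th mu i L j) = 1"
proof (cases "i \<in> suitable d th L")
  case True
  have "(\<Sum>j\<in>suitable d th L. if j = i then mu else 1) = mu + real (card (suitable d th L) - 1)"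
    using True by (simp add: sum.If_cases Int_absorb1 flip: Diff_eq)
  also have "\<dots> = real (card (suitable d th L)) - (1 - mu)"
    using card_suitable_ge_1[OF True] by (simp add: of_nat_diff)
  moreover have "real (card (suitable d th L)) - (1 - mu) \<noteq> 0"
    using card_suitable_ge_1[OF True] mu_pos by linarith
  ultimately show ?thesis
    using True by (simp add: tilt_weight_def flip: sum_divide_distrib)
qed (use assms in \<open>simp add: tilt_weight_def\<close>)

lemma tilt_weight_ge:
  assumes "j \<in> suitable d th L" "j \<noteq> i"
  shows "1 / real d \<le> tilt_weight d th mu i L j"
proof -
  define s where "s = real (card (suitable d th L))"
  have s: "1 \<le> s" "s \<le> real d"
    using card_suitable_ge_1[OF assms(1)] card_suitable_le unfolding s_def by auto
  show ?thesis
  proof (cases "i \<in> suitable d th L")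
    case True
    have "1 / real d \<le> 1 / (s - (1 - mu))"
      using s mu_pos mu_le_1 by (intro divide_left_mono) auto
    then show ?thesis
      using True assms(2) by (simp add: tilt_weight_in s_def)
  next
    case False
    have "1 / real d \<le> 1 / s"
      using s by (intro divide_left_mono) auto
    then show ?thesis
      using False by (simp add: tilt_weight_def s_def)
  qed
qed

end

sublocale tilted \<subseteq> tilt: load_kernel d th "tilt_weight d th mu i"
  by unfold_locales (simp_all add: tilt_weight_nonneg tilt_weight_sum)

context tilted
begin

fun incr_mgf :: "nat \<Rightarrow> (nat \<Rightarrow> nat) \<Rightarrow> real" where
  "incr_mgf 0 L = 1"
| "incr_mgf (Suc n) L = (1 - (1 - mu) / real (card (suitable d th L))) * tilt.step_exp L (incr_mgf n)"

lemma incr_mgf_nonneg: "0 \<le> incr_mgf n L"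
proof (induction n arbitrary: L)
  case (Suc n)
  have "(1 - mu) / real (card (suitable d th L)) \<le> 1"
    using mu_pos mu_le_1 by (cases "card (suitable d th L)") (auto simp: field_simps)
  then show ?case
    using Suc by (auto intro!: mult_nonneg_nonneg tilt.step_exp_nonneg)
qed simp

lemma step_exp_power_incr_mgf:
  assumes i: "i \<in> suitable d th L" and "L0 i \<le> L i"
  shows "unif.step_exp d th L (\<lambda>L'. mu ^ (L' i - L0 i) * incr_mgf n L')
    = mu ^ (L i - L0 i) * incr_mgf (Suc n) L"
proof -
  define s where "s = real (card (suitable d th L))"
  have s: "1 \<le> s"
    using card_suitable_ge_1[OF i] by (simp add: s_def)
  have pw: "mu ^ (incr L j i - L0 i) = mu ^ (L i - L0 i) * (if j = i then mu else 1)" for j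
    using assms(2) by (simp add: Suc_diff_le)
  define S where "S = (\<Sum>j\<in>suitable d th L. (if j = i then mu else 1) * incr_mgf n (incr L j))"
  have "unif.step_exp d th L (\<lambda>L'. mu ^ (L' i - L0 i) * incr_mgf n L') = mu ^ (L i - L0 i) * (S / s)"
    by (simp add: unif.step_exp_def unif_weight_def pw S_def s_def sum_distrib_left sum_divide_distrib
        mult_ac)
  moreover have "tilt.step_exp L (incr_mgf n) = S / (s - (1 - mu))"
    by (simp add: tilt.step_exp_def tilt_weight_in[OF i] S_def s_def sum_divide_distrib)
  moreover have "(1 - (1 - mu) / s) * (S / (s - (1 - mu))) = S / s"
  proof -
    define a where "a = s - (1 - mu)"
    have "0 < a"
      using s mu_pos by (simp add: a_def)
    moreover have "1 - (1 - mu) / s = a / s"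
      using s by (simp add: a_def diff_divide_distrib)
    ultimately show ?thesis
      unfolding a_def[symmetric] by simp
  qed
  ultimately show ?thesis
    by (simp add: s_def)
qed

(* The moment generating function of the number of cards mini-deck i receives; the second
   summand accounts for the runs on which i fills up. *)
lemma iter_exp_power_le:
  assumes "i < d" "L0 i \<le> L i" "L i \<le> th"
  shows "unif.iter_exp d th n (\<lambda>L'. mu ^ (L' i - L0 i)) L
    \<le> mu ^ (L i - L0 i) * incr_mgf n L + mu ^ (th - L0 i)"
  using assms(2,3)
proof (induction n arbitrary: L)
  case (Suc n)
  show ?case
  proof (cases "i \<in> suitable d th L")
    case True
    have "unif.iter_exp d th (Suc n) (\<lambda>L'. mu ^ (L' i - L0 i)) L
        \<le> unif.step_exp d th L (\<lambda>L'. mu ^ (L' i - L0 i) * incr_mgf n L' + mu ^ (th - L0 i))"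
      unfolding unif.iter_exp.simps
    proof (rule unif.step_exp_mono)
      fix j assume "j \<in> suitable d th L"
      have "L0 i \<le> incr L j i" "incr L j i \<le> th"
        using True Suc.prems by (cases "j = i"; simp add: suitable_iff)+
      then show "unif.iter_exp d th n (\<lambda>L'. mu ^ (L' i - L0 i)) (incr L j)
          \<le> mu ^ (incr L j i - L0 i) * incr_mgf n (incr L j) + mu ^ (th - L0 i)"
        by (rule Suc.IH)
    qed
    also have "\<dots> = mu ^ (L i - L0 i) * incr_mgf (Suc n) L + mu ^ (th - L0 i)"
      using unif.step_exp_const[of d th L] True
      by (auto simp: unif.step_exp_add step_exp_power_incr_mgf[of L L0 n, OF True Suc.prems(1)]
          simp del: incr_mgf.simps)
    finally show ?thesis .
  next
    case False
    then have full: "th \<le> L i"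
      using assms(1) by (simp add: suitable_iff)
    have "unif.iter_exp d th (Suc n) (\<lambda>L'. mu ^ (L' i - L0 i)) L \<le> mu ^ (th - L0 i)"
      using full mu_pos mu_le_1
      by (intro unif.iter_exp_le_const_inv[where P="\<lambda>L'. th \<le> L' i"])
         (auto simp: suitable_iff incr_def intro!: power_decreasing)
    moreover have "0 \<le> mu ^ (L i - L0 i) * incr_mgf (Suc n) L"
      using mu_pos incr_mgf_nonneg by (simp del: incr_mgf.simps)
    ultimately show ?thesis
      by linarith
  qed
qed (use mu_pos in simp)

(* The gain of a tilted step with card S < d suitable mini-decks over the factor
   1 - (1 - mu) / d (tilted_step_factor_le). *)
definition excess :: "(nat \<Rightarrow> nat) \<Rightarrow> real" where
  "excess L = (1 - mu) * (real d - real (card (suitable d th L))) / (real d)\<^sup>2"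

definition acc_excess :: "nat \<Rightarrow> (nat \<Rightarrow> nat) \<Rightarrow> real" where
  "acc_excess n L = (\<Sum>t<n. tilt.iter_exp t excess L)"

lemma excess_nonneg: "0 \<le> excess L"
  using card_suitable_le[of d th L] mu_le_1 by (simp add: excess_def)

lemma excess_le: "excess L \<le> (1 - mu) / real d"
proof (cases "d = 0")
  case False
  have "excess L \<le> (1 - mu) * real d / (real d)\<^sup>2"
    unfolding excess_def using mu_le_1 by (intro divide_right_mono mult_left_mono) auto
  also have "\<dots> = (1 - mu) / real d"
    using False by (simp add: power2_eq_square)
  finally show ?thesis .
qed (unfold excess_def, simp)

lemma acc_excess_Suc: "acc_excess (Suc n) L = excess L + tilt.step_exp L (acc_excess n)"
  unfolding acc_excess_def sum.lessThan_Suc_shift by (simp add: tilt.step_exp_sum)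

lemma acc_excess_nonneg: "0 \<le> acc_excess n L"
  unfolding acc_excess_def by (intro sum_nonneg tilt.iter_exp_nonneg excess_nonneg)

lemma acc_excess_le_1:
  assumes "n \<le> d"
  shows "acc_excess n L \<le> 1"
proof -
  have "acc_excess n L \<le> (\<Sum>t<n. (1 - mu) / real d)"
    unfolding acc_excess_def using mu_le_1
    by (intro sum_mono tilt.iter_exp_le_const excess_le) auto
  also have "\<dots> \<le> 1"
    using assms mu_pos mu_le_1 mult_mono[of "real n" "real d" "1 - mu" 1]
    by (cases "d = 0") (auto simp: field_simps)
  finally show ?thesis .
qed

lemma incr_mgf_le:
  assumes "1 \<le> d" "n \<le> d" "n \<le> (\<Sum>k<d. th - L k)"
  shows "incr_mgf n L \<le> (1 - (1 - mu) / real d) ^ n * (1 - acc_excess n L / 2)"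
  using assms(2,3)
proof (induction n arbitrary: L)
  case (Suc n)
  define q where "q = 1 - mu"
  define A where "A = (1 - q / real d) ^ n"
  have q: "0 \<le> q" "q \<le> 1"
    using mu_pos mu_le_1 by (auto simp: q_def)
  have qd: "0 \<le> 1 - q / real d"
    using q assms(1) by (simp add: field_simps)
  have A: "0 \<le> A"
    using qd by (simp add: A_def)
  have "suitable d th L \<noteq> {}"
    using Suc.prems by (intro suitable_nonempty_capacity) linarith
  then obtain j0 where j0: "j0 \<in> suitable d th L"
    by blast
  define s where "s = real (card (suitable d th L))"
  have s: "1 \<le> s" "s \<le> real d"
    using card_suitable_ge_1[OF j0] card_suitable_le by (auto simp: s_def)
  define Y where "Y = tilt.step_exp L (acc_excess n)"
  have Y: "0 \<le> Y" "Y \<le> 1"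
    using Suc.prems(1) unfolding Y_def
    by (auto intro!: tilt.step_exp_nonneg tilt.step_exp_le_const acc_excess_nonneg acc_excess_le_1)
  have "tilt.step_exp L (incr_mgf n) \<le> tilt.step_exp L (\<lambda>L'. A + (- (A / 2)) * acc_excess n L')"
  proof (rule tilt.step_exp_mono)
    fix j assume "j \<in> suitable d th L"
    then have "n \<le> (\<Sum>k<d. th - incr L j k)"
      using capacity_incr Suc.prems by (metis Suc_eq_plus1 Suc_le_mono)
    then show "incr_mgf n (incr L j) \<le> A + (- (A / 2)) * acc_excess n (incr L j)"
      using Suc.IH[of "incr L j"] Suc.prems(1) by (simp add: A_def q_def algebra_simps)
  qed
  also have "\<dots> = tilt.step_exp L (\<lambda>_. A) + (- (A / 2)) * Y"
    by (simp only: tilt.step_exp_add tilt.step_exp_cmult Y_def)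
  also have "\<dots> = A * (1 - Y / 2)"
    using tilt.step_exp_const[of L A] j0 by (auto simp: algebra_simps)
  finally have IH: "tilt.step_exp L (incr_mgf n) \<le> A * (1 - Y / 2)" .
  have "0 \<le> 1 - q / s"
    using s q by (simp add: field_simps)
  then have "incr_mgf (Suc n) L \<le> (1 - q / s) * (A * (1 - Y / 2))"
    using IH by (simp add: q_def s_def mult_left_mono)
  also have "\<dots> \<le> (1 - q / real d) * A * (1 - (excess L + Y) / 2)"
    using tilted_step_factor_le[OF s q A Y] by (simp add: excess_def q_def s_def)
  also have "\<dots> = (1 - (1 - mu) / real d) ^ Suc n * (1 - acc_excess (Suc n) L / 2)"
    by (simp add: A_def q_def Y_def acc_excess_Suc)
  finally show ?case .
qed (simp add: acc_excess_def)

lemma iter_exp_open_ind_full: "th \<le> L j \<Longrightarrow> tilt.iter_exp n (open_ind th j) L = 0"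
proof (induction n arbitrary: L)
  case (Suc n)
  have "tilt.step_exp L (tilt.iter_exp n (open_ind th j)) = tilt.step_exp L (\<lambda>_. 0)"
    using Suc by (intro tilt.step_exp_cong Suc.IH) (auto simp: suitable_iff incr_def)
  then show ?case
    by (simp add: tilt.step_exp_def)
qed (simp add: open_ind_def)

lemma iter_exp_open_ind_spare_1:
  assumes "j \<noteq> i" "j < d"
  shows "Suc (L j) = th \<Longrightarrow> tilt.iter_exp n (open_ind th j) L \<le> (1 - 1 / real d) ^ n"
proof (induction n arbitrary: L)
  case (Suc n)
  have j: "j \<in> suitable d th L"
    using Suc.prems assms by (auto simp: suitable_iff)
  have "tilt.iter_exp (Suc n) (open_ind th j) L
      \<le> (\<Sum>k\<in>suitable d th L. tilt_weight d th mu i L k * (if k = j then 0 else (1 - 1 / real d) ^ n))"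
    unfolding tilt.iter_exp.simps tilt.step_exp_def
  proof (intro sum_mono mult_left_mono tilt_weight_nonneg)
    fix k assume "k \<in> suitable d th L"
    show "tilt.iter_exp n (open_ind th j) (incr L k) \<le> (if k = j then 0 else (1 - 1 / real d) ^ n)"
      using Suc.prems by (cases "k = j") (simp_all add: iter_exp_open_ind_full Suc.IH)
  qed
  also have "\<dots> = (1 - 1 / real d) ^ n * (1 - tilt_weight d th mu i L j)"
    using tilt_weight_sum[of L] j by (auto simp: sum_mult_if_eq algebra_simps)
  also have "\<dots> \<le> (1 - 1 / real d) ^ n * (1 - 1 / real d)"
    using tilt_weight_ge[OF j assms(1)] assms(2) by (intro mult_left_mono) auto
  finally show ?case
    by (simp add: mult.commute)
qed (simp add: open_ind_def)

lemma iter_exp_open_ind_spare_2: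
  assumes "j \<noteq> i" "j < d"
  shows "Suc (Suc (L j)) = th \<Longrightarrow> tilt.iter_exp n (open_ind th j) L \<le> binomial_le_1 (1 / real d) n"
proof (induction n arbitrary: L)
  case (Suc n)
  define p where "p = 1 / real d"
  have p: "0 \<le> p" "p \<le> 1"
    using assms(2) by (auto simp: p_def)
  have j: "j \<in> suitable d th L"
    using Suc.prems assms by (auto simp: suitable_iff)
  have "tilt.iter_exp (Suc n) (open_ind th j) L
      \<le> (\<Sum>k\<in>suitable d th L. tilt_weight d th mu i L k * (if k = j then (1 - p) ^ n else binomial_le_1 p n))"
    unfolding tilt.iter_exp.simps tilt.step_exp_def
  proof (intro sum_mono mult_left_mono tilt_weight_nonneg)
    fix k assume "k \<in> suitable d th L"
    show "tilt.iter_exp n (open_ind th j) (incr L k) \<le> (if k = j then (1 - p) ^ n else binomial_le_1 p n)"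
      using Suc.prems iter_exp_open_ind_spare_1[OF assms, of "incr L j" n]
      by (cases "k = j") (simp_all add: Suc.IH p_def)
  qed
  also have "\<dots> = binomial_le_1 p n + ((1 - p) ^ n - binomial_le_1 p n) * tilt_weight d th mu i L j"
    using tilt_weight_sum[of L] j by (auto simp: sum_mult_if_eq)
  also have "\<dots> \<le> binomial_le_1 p n + ((1 - p) ^ n - binomial_le_1 p n) * p"
    using tilt_weight_ge[OF j assms(1)] power_le_binomial_le_1[OF p, of n]
    by (intro add_left_mono mult_left_mono_neg) (simp_all add: p_def)
  also have "\<dots> = binomial_le_1 p (Suc n)"
    by (simp add: binomial_le_1_Suc algebra_simps)
  finally show ?case
    by (simp add: p_def)
qed (simp add: open_ind_def binomial_le_1_def)

lemma excess_ge: "(1 - mu) / (real d)\<^sup>2 * (\<Sum>j\<in>{..<d} - {i}. 1 - open_ind th j L) \<le> excess L"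
proof -
  have "(\<Sum>j\<in>{..<d} - {i}. 1 - open_ind th j L) \<le> (\<Sum>j<d. 1 - open_ind th j L)"
    by (intro sum_mono2) (auto simp: open_ind_def)
  also have "\<dots> = real d - real (card (suitable d th L))"
    by (simp add: card_suitable_eq_sum_open_ind sum_subtractf)
  finally show ?thesis
    unfolding excess_def using mu_le_1
    by (simp add: mult_left_mono divide_right_mono flip: times_divide_eq_left)
qed

lemma iter_exp_filled_ge:
  assumes d: "16 \<le> d" and j: "j < d" "j \<noteq> i" "L0 j < th"
    and t: "d \<le> 2 * t" "t < d" "t \<le> (\<Sum>k<d. th - L0 k)"
  shows "fill_weight th L0 j / 60 \<le> tilt.iter_exp t (\<lambda>L. 1 - open_ind th j L) L0"
proof -
  have "tilt.iter_exp t (\<lambda>L. 1 + (-1) * open_ind th j L) L0 = 1 - tilt.iter_exp t (open_ind th j) L0"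
    using t(3) by (simp only: tilt.iter_exp_add tilt.iter_exp_cmult tilt.iter_exp_const)
  moreover consider "Suc (L0 j) = th" | "Suc (Suc (L0 j)) = th" | "th - L0 j \<noteq> 1" "th - L0 j \<noteq> 2"
    using j(3) by linarith
  then have "fill_weight th L0 j / 60 \<le> 1 - tilt.iter_exp t (open_ind th j) L0"
  proof cases
    case 1
    then show ?thesis
      using iter_exp_open_ind_spare_1[OF j(2,1), of L0 t] 1 one_minus_inverse_power_le[OF d t(1)]
      by (auto simp: fill_weight_def)
  next
    case 2
    then show ?thesis
      using iter_exp_open_ind_spare_2[OF j(2,1), of L0 t] 2 binomial_le_1_le[OF d t(1,2)]
      by (auto simp: fill_weight_def)
  next
    case 3
    have "tilt.iter_exp t (open_ind th j) L0 \<le> 1"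
      by (intro tilt.iter_exp_le_const) (auto simp: open_ind_def)
    then show ?thesis
      using 3 by (simp add: fill_weight_def)
  qed
  ultimately show ?thesis
    by simp
qed

lemma iter_exp_excess_ge:
  assumes d: "16 \<le> d" and i: "i < d" and L0: "\<forall>j<d. L0 j < th"
    and cap: "(\<Sum>j<d. th - L0 j) = 2 * d" and spare: "2 \<le> th - L0 i"
    and t: "d \<le> 2 * t" "t < d"
  shows "(1 - mu) / (real d)\<^sup>2 * ((real d - 1) / 60) \<le> tilt.iter_exp t excess L0"
proof -
  define J where "J = {..<d} - {i}"
  have "(real d - 1) / 60 \<le> (\<Sum>j\<in>J. fill_weight th L0 j / 60)"
    using spare_capacity_count[OF i L0 cap spare] by (simp add: J_def flip: sum_divide_distrib)
  also have "\<dots> \<le> (\<Sum>j\<in>J. tilt.iter_exp t (\<lambda>L. 1 - open_ind th j L) L0)"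
    using iter_exp_filled_ge[OF d _ _ _ t] L0 cap t by (intro sum_mono) (auto simp: J_def)
  also have "\<dots> = tilt.iter_exp t (\<lambda>L. \<Sum>j\<in>J. 1 - open_ind th j L) L0"
    by (simp add: tilt.iter_exp_sum J_def)
  finally have "(1 - mu) / (real d)\<^sup>2 * ((real d - 1) / 60)
      \<le> (1 - mu) / (real d)\<^sup>2 * tilt.iter_exp t (\<lambda>L. \<Sum>j\<in>J. 1 - open_ind th j L) L0"
    using mu_le_1 by (intro mult_left_mono) auto
  also have "\<dots> \<le> tilt.iter_exp t excess L0"
    using excess_ge by (simp add: J_def tilt.iter_exp_mono flip: tilt.iter_exp_cmult)
  finally show ?thesis .
qed

lemma acc_excess_ge:
  assumes d: "16 \<le> d" and i: "i < d" and L0: "\<forall>j<d. L0 j < th"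
    and cap: "(\<Sum>j<d. th - L0 j) = 2 * d" and spare: "2 \<le> th - L0 i"
  shows "(1 - mu) / 240 \<le> acc_excess d L0"
proof -
  define c where "c = (1 - mu) / (real d)\<^sup>2 * ((real d - 1) / 60)"
  have c: "0 \<le> c"
    using mu_le_1 d by (simp add: c_def)
  have "real (d - (d + 1) div 2) * c = (\<Sum>t\<in>{(d + 1) div 2..<d}. c)"
    by simp
  also have "\<dots> \<le> (\<Sum>t\<in>{(d + 1) div 2..<d}. tilt.iter_exp t excess L0)"
    unfolding c_def using iter_exp_excess_ge[OF assms] by (intro sum_mono) auto
  also have "\<dots> \<le> acc_excess d L0"
    unfolding acc_excess_def by (intro sum_mono2 tilt.iter_exp_nonneg excess_nonneg) auto
  finally have bound: "real (d - (d + 1) div 2) * c \<le> acc_excess d L0" .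
  have "d - 1 \<le> 2 * (d - (d + 1) div 2)"
    by linarith
  then have "(real d - 1) / 2 \<le> real (d - (d + 1) div 2)"
    using d by (simp add: of_nat_diff)
  then have "(real d - 1) / 2 * c \<le> real (d - (d + 1) div 2) * c"
    using c by (intro mult_right_mono) auto
  moreover have "(1 - mu) / 240 \<le> (real d - 1) / 2 * c"
  proof -
    have "0 \<le> real d * (real d - 4)"
      using d by simp
    moreover have "2 * (real d - 1)\<^sup>2 = (real d)\<^sup>2 + (real d * (real d - 4) + 2)"
      by (simp add: power2_eq_square algebra_simps)
    ultimately have "(real d)\<^sup>2 \<le> 2 * (real d - 1)\<^sup>2"
      by linarith
    then have "1 / 240 \<le> (real d - 1)\<^sup>2 / (120 * (real d)\<^sup>2)"
      using d by (simp add: field_simps)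
    then have "(1 - mu) * (1 / 240) \<le> (1 - mu) * ((real d - 1)\<^sup>2 / (120 * (real d)\<^sup>2))"
      using mu_le_1 by (intro mult_left_mono) auto
    then show ?thesis
      by (simp add: c_def power2_eq_square field_simps)
  qed
  ultimately show ?thesis
    using bound by simp
qed

lemma round_mgf_le:
  assumes "16 \<le> d" "i < d" "\<forall>j<d. L0 j < th" "(\<Sum>j<d. th - L0 j) = 2 * d" "2 \<le> th - L0 i"
  shows "unif.iter_exp d th d (\<lambda>L. mu ^ (L i - L0 i)) L0 \<le> round_factor d mu + mu ^ (th - L0 i)"
proof -
  have "incr_mgf d L0 \<le> (1 - (1 - mu) / real d) ^ d * (1 - acc_excess d L0 / 2)"
    using assms by (intro incr_mgf_le) auto
  also have "\<dots> \<le> round_factor d mu"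
    unfolding round_factor_def using acc_excess_ge[OF assms] assms(1) mu_pos mu_le_1
    by (intro mult_left_mono zero_le_power) (auto simp: field_simps)
  moreover have "unif.iter_exp d th d (\<lambda>L. mu ^ (L i - L0 i)) L0 \<le> incr_mgf d L0 + mu ^ (th - L0 i)"
    using iter_exp_power_le[of L0 L0 d] assms(2,3) by (simp add: less_imp_le)
  ultimately show ?thesis
    by linarith
qed

end

section \<open>The potential\<close>

definition potential :: "nat \<Rightarrow> real \<Rightarrow> nat \<Rightarrow> (nat \<Rightarrow> nat) \<Rightarrow> real" where
  "potential d lam th L = (\<Sum>j<d. lam ^ (th - L j))"

lemma potential_nonneg: "1 \<le> lam \<Longrightarrow> 0 \<le> potential d lam th L"
  unfolding potential_def by (intro sum_nonneg) simp

lemma potential_le: "1 \<le> lam \<Longrightarrow> potential d lam th L \<le> real d * lam ^ th"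
  using sum_mono[of "{..<d}" "\<lambda>j. lam ^ (th - L j)" "\<lambda>_. lam ^ th"]
  by (simp add: potential_def power_increasing)

lemma potential_incr_le: "1 \<le> lam \<Longrightarrow> potential d lam th (incr L j) \<le> potential d lam th L"
  unfolding potential_def by (intro sum_mono power_increasing) (auto simp: incr_def)

lemma deck_potential_round_le:
  fixes lam :: real
  assumes lam: "1 \<le> lam" and d: "16 \<le> d" and j: "j < d"
    and L0: "\<forall>j<d. L0 j < th" and cap: "(\<Sum>j<d. th - L0 j) = 2 * d"
  shows "lam ^ Suc (th - L0 j) * unif.iter_exp d th d (\<lambda>L. (1 / lam) ^ (L j - L0 j)) L0
    \<le> lam * round_factor d (1 / lam) * lam ^ (th - L0 j) + (lam + lam\<^sup>2)"
proof -
  define mu where "mu = 1 / lam"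
  interpret tilted d th mu j
    using lam by unfold_locales (auto simp: mu_def)
  have lam_mu: "lam ^ Suc (th - L0 j) * mu ^ (th - L0 j) = lam"
    using lam by (simp add: mu_def power_one_over)
  have "lam ^ Suc (th - L0 j) * unif.iter_exp d th d (\<lambda>L. mu ^ (L j - L0 j)) L0
    \<le> lam * round_factor d mu * lam ^ (th - L0 j) + (lam + lam\<^sup>2)"
  proof (cases "2 \<le> th - L0 j")
    case True
    have "lam ^ Suc (th - L0 j) * unif.iter_exp d th d (\<lambda>L. mu ^ (L j - L0 j)) L0
        \<le> lam ^ Suc (th - L0 j) * (round_factor d mu + mu ^ (th - L0 j))"
      using round_mgf_le[OF d j L0 cap True] lam by (intro mult_left_mono) auto
    also have "\<dots> = lam * round_factor d mu * lam ^ (th - L0 j) + lam"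
      using lam_mu by (simp add: algebra_simps)
    finally show ?thesis
      using zero_le_power2[of lam] by linarith
  next
    case False
    then have "th - L0 j = 1"
      using j L0 by fastforce
    moreover have "unif.iter_exp d th d (\<lambda>L. mu ^ (L j - L0 j)) L0 \<le> 1"
      using mu_pos mu_le_1 by (intro unif.iter_exp_le_const power_le_one) auto
    ultimately have "lam ^ Suc (th - L0 j) * unif.iter_exp d th d (\<lambda>L. mu ^ (L j - L0 j)) L0 \<le> lam\<^sup>2"
      using lam mult_left_mono[of _ 1 "lam\<^sup>2"] by (simp add: power2_eq_square)
    moreover have "0 \<le> lam * round_factor d mu * lam ^ (th - L0 j)"
      using lam d mu_pos mu_le_1 by (simp add: round_factor_nonneg)
    ultimately show ?thesis
      using lam by linarith
  qed
  then show ?thesis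
    by (simp add: mu_def)
qed

lemma potential_round_le:
  fixes lam :: real
  assumes lam: "1 \<le> lam" and d: "16 \<le> d"
    and L0: "\<forall>j<d. L0 j < th" and cap: "(\<Sum>j<d. th - L0 j) = 2 * d"
  shows "unif.iter_exp d th d (potential d lam (Suc th)) L0
    \<le> lam * round_factor d (1 / lam) * potential d lam th L0 + (lam + lam\<^sup>2) * real d"
proof -
  define R where "R L \<longleftrightarrow> (\<forall>j<d. L0 j \<le> L j \<and> L j \<le> th)" for L
  \<comment> \<open>Along a round every load stays between its initial value and the threshold, so the potential
    at the next threshold splits over the decks into moment generating functions of the
    numbers of cards they receive.\<close>
  have "unif.iter_exp d th d (potential d lam (Suc th)) L0
      \<le> unif.iter_exp d th d (\<lambda>L. \<Sum>j<d. lam ^ Suc (th - L0 j) * (1 / lam) ^ (L j - L0 j)) L0"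
  proof (rule unif.iter_exp_mono_inv[where P=R])
    show "R (incr L j)" if "R L" "j \<in> suitable d th L" for L j
      using that by (auto simp: R_def suitable_iff incr_def)
    show "potential d lam (Suc th) L \<le> (\<Sum>j<d. lam ^ Suc (th - L0 j) * (1 / lam) ^ (L j - L0 j))"
      if "R L" for L
      using that lam by (auto simp: R_def potential_def power_diff power_one_over Suc_diff_le
          intro!: sum_mono)
    show "R L0"
      using L0 by (simp add: R_def less_imp_le)
  qed
  also have "\<dots> = (\<Sum>j<d. lam ^ Suc (th - L0 j) * unif.iter_exp d th d (\<lambda>L. (1 / lam) ^ (L j - L0 j)) L0)"
    by (simp add: unif.iter_exp_sum unif.iter_exp_cmult)
  also have "\<dots> \<le> (\<Sum>j<d. lam * round_factor d (1 / lam) * lam ^ (th - L0 j) + (lam + lam\<^sup>2))"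
    using deck_potential_round_le[OF lam d _ L0 cap] by (intro sum_mono) auto
  also have "\<dots> = lam * round_factor d (1 / lam) * potential d lam th L0 + (lam + lam\<^sup>2) * real d"
    by (simp add: potential_def sum.distrib sum_distrib_left)
  finally show ?thesis .
qed

definition pot_base :: real where
  "pot_base = 1001 / 1000"

lemma pot_base_ge_1: "1 \<le> pot_base"
  by (simp add: pot_base_def)

lemma round_contraction:
  assumes "1 \<le> d"
  shows "pot_base * round_factor d (1 / pot_base) \<le> 1 - 1 / 10 ^ 6"
proof -
  define q :: real where "q = 1 / 1001"
  have q: "1 - 1 / pot_base = q"
    by (simp add: pot_base_def q_def)
  have "1 + real d * (q / real d) \<le> (1 + q / real d) ^ d"
  proof (rule Bernoulli_inequality)
    have "0 \<le> q / real d"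
      by (simp add: q_def)
    then show "-1 \<le> q / real d"
      by linarith
  qed
  then have "(1 - q / real d) ^ d \<le> 1 / (1 + q)"
    using assms by (intro power_one_minus_le_inverse) (auto simp: q_def field_simps)
  then have "pot_base * ((1 - q / real d) ^ d * (1 - q / 480)) \<le> pot_base * ((1 / (1 + q)) * (1 - q / 480))"
    by (intro mult_left_mono mult_right_mono) (auto simp: q_def pot_base_def)
  also have "\<dots> \<le> 1 - 1 / 10 ^ 6"
    by (simp add: q_def pot_base_def)
  finally show ?thesis
    unfolding round_factor_def q .
qed

lemma square_le_pot_base_power: "(real r)\<^sup>2 \<le> 4 * 10 ^ 6 * pot_base ^ r"
proof (cases "r \<le> 1")
  case True
  then have "(real r)\<^sup>2 \<le> 1"
    by (cases r) auto
  then show ?thesis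
    using one_le_power[OF pot_base_ge_1, of r] by simp
next
  case False
  define p :: real where "p = 1 / 1000"
  have "(real r)\<^sup>2 * (p\<^sup>2 / 4) \<le> (2 * (real r * (real r - 1))) * (p\<^sup>2 / 4)"
    using False by (intro mult_right_mono) (auto simp: power2_eq_square algebra_simps)
  also have "\<dots> \<le> 1 + real r * p + real r * (real r - 1) / 2 * p\<^sup>2"
    by (simp add: p_def field_simps)
  also have "\<dots> \<le> pot_base ^ r"
    using binomial_second_order_le[of p r] by (simp add: p_def pot_base_def)
  finally show ?thesis
    by (simp add: p_def field_simps)
qed

lemma round_start_loads:
  assumes "0 < d" "L \<in> set_pmf (load_pmf d (c * d + 1))"
  shows "\<forall>j<d. L j < c + 2" "(\<Sum>j<d. c + 2 - L j) = 2 * d"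
proof -
  have loads: "(\<Sum>j<d. L j) = c * d" "\<And>j. L j \<le> ATD_threshold d (c * d)"
    using set_load_pmf[OF assms] by auto
  show L: "\<forall>j<d. L j < c + 2"
    using loads(2) ATD_threshold_le[OF assms(1), of "c * d" c] by (auto intro: le_less_trans)
  show "(\<Sum>j<d. c + 2 - L j) = 2 * d"
    using capacity_sum[of d L "c + 2"] L loads(1) by (simp add: less_imp_le algebra_simps)
qed

lemma potential_bounds:
  "0 \<le> potential d pot_base th L" "potential d pot_base th L \<le> real d * pot_base ^ th"
  by (rule potential_nonneg[OF pot_base_ge_1], rule potential_le[OF pot_base_ge_1])

lemma expectation_potential_next_round:
  assumes d: "16 \<le> d"
  shows "measure_pmf.expectation (load_pmf d (Suc c * d + 1)) (potential d pot_base (Suc c + 2))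
    \<le> pot_base * round_factor d (1 / pot_base) * measure_pmf.expectation (load_pmf d (c * d + 1)) (potential d pot_base (c + 2))
      + (pot_base + pot_base\<^sup>2) * real d"
proof -
  have d0: "0 < d"
    using d by simp
  have "measure_pmf.expectation (load_pmf d (Suc c * d + 1)) (potential d pot_base (Suc c + 2))
      = measure_pmf.expectation (load_pmf d (c * d + 1)) (unif.iter_exp d (c + 2) d (potential d pot_base (Suc (c + 2))))"
    using expectation_load_pmf_add[OF d0 _ _ potential_bounds, of "c * d + 1" d "c + 2"] ATD_threshold_round[of c d]
    by (simp add: algebra_simps)
  also have "\<dots> \<le> measure_pmf.expectation (load_pmf d (c * d + 1))
      (\<lambda>L. pot_base * round_factor d (1 / pot_base) * potential d pot_base (c + 2) L + (pot_base + pot_base\<^sup>2) * real d)"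
    using round_start_loads[OF d0] potential_round_le[OF pot_base_ge_1 d]
    by (intro integral_mono_AE unif.integrable_iter_exp[OF potential_bounds])
       (auto simp: AE_measure_pmf_iff intro!: integrable_bounded_pmf[OF potential_bounds])
  also have "\<dots> = pot_base * round_factor d (1 / pot_base) * measure_pmf.expectation (load_pmf d (c * d + 1)) (potential d pot_base (c + 2))
      + (pot_base + pot_base\<^sup>2) * real d"
    by (simp add: integrable_bounded_pmf[OF potential_bounds])
  finally show ?thesis .
qed

lemma expectation_potential_round_start:
  assumes d: "16 \<le> d"
  shows "measure_pmf.expectation (load_pmf d (c * d + 1)) (potential d pot_base (c + 2)) \<le> 3 * 10 ^ 6 * real d"
proof (induction c)
  case 0
  have "measure_pmf.expectation (load_pmf d (0 * d + 1)) (potential d pot_base (0 + 2)) = real d * pot_base\<^sup>2"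
    by (simp add: potential_def numeral_2_eq_2)
  then show ?case
    by (simp add: pot_base_def power2_eq_square)
next
  case (Suc c)
  let ?E = "measure_pmf.expectation (load_pmf d (c * d + 1)) (potential d pot_base (c + 2))"
  have "pot_base * round_factor d (1 / pot_base) * ?E \<le> (1 - 1 / 10 ^ 6) * (3 * 10 ^ 6 * real d)"
  proof (rule mult_mono)
    show "pot_base * round_factor d (1 / pot_base) \<le> 1 - 1 / 10 ^ 6"
      using d by (intro round_contraction) simp
    show "0 \<le> ?E"
      using potential_bounds by (intro integral_nonneg_AE) auto
  qed (use Suc.IH in simp_all)
  moreover have "(pot_base + pot_base\<^sup>2) * real d \<le> 3 * real d"
    by (simp add: pot_base_def power2_eq_square)
  ultimately show ?case
    using expectation_potential_next_round[OF d, of c] by simp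
qed

lemma expectation_potential_le:
  assumes d: "16 \<le> d" and w: "w < d"
  shows "measure_pmf.expectation (load_pmf d (c * d + w + 1)) (potential d pot_base (c + 2)) \<le> 3 * 10 ^ 6 * real d"
proof -
  have "measure_pmf.expectation (load_pmf d (c * d + w + 1)) (potential d pot_base (c + 2))
      = measure_pmf.expectation (load_pmf d (c * d + 1)) (unif.iter_exp d (c + 2) w (potential d pot_base (c + 2)))"
    using d expectation_load_pmf_add[OF _ _ _ potential_bounds, of d "c * d + 1" w] ATD_threshold_round[of c d] w
    by (simp add: algebra_simps)
  also have "\<dots> \<le> measure_pmf.expectation (load_pmf d (c * d + 1)) (potential d pot_base (c + 2))"
    \<comment> \<open>Within a round the threshold is fixed and loads only grow, so the potential can only decrease.\<close>
    by (intro integral_mono unif.integrable_iter_exp[OF potential_bounds] integrable_bounded_pmf[OF potential_bounds]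
        unif.iter_exp_le_self potential_bounds potential_incr_le pot_base_ge_1)
  also have "\<dots> \<le> 3 * 10 ^ 6 * real d"
    using d by (rule expectation_potential_round_start)
  finally show ?thesis .
qed

lemma divide_card_suitable_le: "real d / real (card (suitable d th L)) \<le> real d"
proof (cases "card (suitable d th L) = 0")
  case False
  then have "0 < card (suitable d th L)"
    by (simp only: neq0_conv)
  then have "real d * 1 \<le> real d * real (card (suitable d th L))"
    by (intro mult_left_mono) auto
  then show ?thesis
    using False by (simp add: divide_le_eq)
qed simp

lemma divide_card_suitable_le_potential:
  assumes d: "0 < d" and w: "w < d" and L: "L \<in> set_pmf (load_pmf d (c * d + w + 1))"
  shows "real d / real (card (suitable d (c + 2) L)) \<le> 4 * 10 ^ 6 / real d * potential d pot_base (c + 2) L"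
proof -
  define th where "th = c + 2"
  define S where "S = suitable d th L"
  define r where "r j = real (th - L j)" for j
  have th: "ATD_threshold d (c * d + w + 1) = th"
    unfolding th_def using w by (intro ATD_threshold_round) auto
  have loads: "(\<Sum>j<d. L j) = c * d + w" "\<And>j. L j \<le> ATD_threshold d (c * d + w)"
    using set_load_pmf[OF d L] by auto
  have "L j \<le> th" for j
    using loads(2)[of j] ATD_threshold_mono[of "c * d + w" "c * d + w + 1" d] th by linarith
  then have "(\<Sum>j<d. th - L j) = 2 * d - w"
    using capacity_sum[of d L th] loads(1) by (simp add: th_def algebra_simps)
  moreover have "(\<Sum>j\<in>S. th - L j) = (\<Sum>j<d. th - L j)"
    unfolding S_def using suitable_subset
    by (intro sum.mono_neutral_left) (auto simp: suitable_iff)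
  ultimately have "real d + 1 \<le> (\<Sum>j\<in>S. r j)"
    using w by (simp add: r_def flip: of_nat_sum)
  then have "(real d)\<^sup>2 \<le> (\<Sum>j\<in>S. r j)\<^sup>2"
    by (intro power_mono) auto
  \<comment> \<open>Cauchy-Schwarz: the spare capacity, at least d + 1 in total, sits on the card S suitable decks.\<close>
  also have "\<dots> \<le> (\<Sum>j\<in>S. (r j)\<^sup>2) * real (card S)"
    using Cauchy_Schwarz_ineq_sum[of r "\<lambda>_. 1" S] by simp
  finally have key: "(real d)\<^sup>2 \<le> (\<Sum>j\<in>S. (r j)\<^sup>2) * real (card S)" .
  have "S \<noteq> {}"
    using suitable_load_nonempty[OF d L] th by (simp add: S_def)
  then have "0 < real (card S)"
    by (simp add: S_def card_gt_0_iff)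
  then have "real d / real (card S) \<le> (\<Sum>j\<in>S. (r j)\<^sup>2) / real d"
    using key d by (simp add: field_simps power2_eq_square)
  also have "\<dots> \<le> (\<Sum>j<d. 4 * 10 ^ 6 * pot_base ^ (th - L j)) / real d"
  proof (intro divide_right_mono order.trans[OF sum_mono sum_mono2])
    show "(r j)\<^sup>2 \<le> 4 * 10 ^ 6 * pot_base ^ (th - L j)" for j
      unfolding r_def by (rule square_le_pot_base_power)
  qed (use suitable_subset pot_base_ge_1 in \<open>auto simp: S_def\<close>)
  also have "\<dots> = 4 * 10 ^ 6 / real d * potential d pot_base th L"
    by (simp add: potential_def sum_distrib_left sum_divide_distrib)
  finally show ?thesis
    by (simp add: S_def th_def)
qed

lemma expectation_divide_card_suitable_le:
  assumes d: "0 < d" and t: "1 \<le> t"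
  shows "measure_pmf.expectation (load_pmf d t) (\<lambda>L. real d / real (card (suitable d (ATD_threshold d t) L)))
    \<le> 12 * 10 ^ 12"
proof (cases "16 \<le> d")
  case True
  define c where "c = (t - 1) div d"
  define w where "w = (t - 1) mod d"
  have w: "w < d" and t_eq: "t = c * d + w + 1"
    using d t by (auto simp: c_def w_def)
  have th: "ATD_threshold d t = c + 2"
    using w t_eq by (intro ATD_threshold_round) auto
  have "measure_pmf.expectation (load_pmf d t) (\<lambda>L. real d / real (card (suitable d (ATD_threshold d t) L)))
      \<le> measure_pmf.expectation (load_pmf d t) (\<lambda>L. 4 * 10 ^ 6 / real d * potential d pot_base (c + 2) L)"
    using divide_card_suitable_le_potential[OF d w] divide_card_suitable_le unfolding th
    by (intro integral_mono_AE integrable_bounded_pmf[where B="real d"]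
        integrable_mult_right integrable_bounded_pmf[OF potential_bounds])
       (auto simp: AE_measure_pmf_iff t_eq)
  also have "\<dots> = 4 * 10 ^ 6 / real d * measure_pmf.expectation (load_pmf d t) (potential d pot_base (c + 2))"
    by simp
  also have "\<dots> \<le> 4 * 10 ^ 6 / real d * (3 * 10 ^ 6 * real d)"
    using expectation_potential_le[OF True w, of c] by (intro mult_left_mono) (auto simp: t_eq)
  also have "\<dots> = 12 * 10 ^ 12"
    using d by simp
  finally show ?thesis .
next
  case False
  have "measure_pmf.expectation (load_pmf d t) (\<lambda>L. real d / real (card (suitable d (ATD_threshold d t) L)))
      \<le> measure_pmf.expectation (load_pmf d t) (\<lambda>_. real d)"
    using divide_card_suitable_le by (intro integral_mono integrable_bounded_pmf[where B="real d"]) auto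
  then show ?thesis
    using False by simp
qed

(* The bound holds at every turn t >= 1. *)
theorem lemma3p11:
  shows "\<exists>C::real. \<forall>n d t. 0 < d \<longrightarrow> d dvd n \<longrightarrow> 1 \<le> t \<longrightarrow> t \<le> n - 2 * d \<longrightarrow>
     (\<integral>\<^sup>+ \<omega>. ennreal (real (ATD_nsamples d (ATD_L d \<omega> t) t (\<omega> !! t))) \<partial>ATD_space d)
       \<le> ennreal C"
proof (intro exI allI impI)
  fix n d t :: nat
  assume d: "0 < d" and t: "1 \<le> t"
  let ?samples = "\<lambda>L. real d / real (card (suitable d (ATD_threshold d t) L))"
  have "(\<integral>\<^sup>+\<omega>. ennreal (real (ATD_nsamples d (ATD_L d \<omega> t) t (\<omega> !! t))) \<partial>ATD_space d)
      \<le> (\<integral>\<^sup>+L. ennreal (?samples L) \<partial>load_pmf d t)"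
    by (rule nn_integral_ATD_nsamples_le[OF d])
  also have "\<dots> = ennreal (measure_pmf.expectation (load_pmf d t) ?samples)"
    using divide_card_suitable_le by (intro nn_integral_eq_integral integrable_bounded_pmf) auto
  also have "\<dots> \<le> ennreal (12 * 10 ^ 12)"
    using expectation_divide_card_suitable_le[OF d t] by (rule ennreal_leI)
  finally show "(\<integral>\<^sup>+\<omega>. ennreal (real (ATD_nsamples d (ATD_L d \<omega> t) t (\<omega> !! t))) \<partial>ATD_space d)
      \<le> ennreal (12 * 10 ^ 12)" .
qed

end
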